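(* Let $G$ be a finite nilpotent group and $H$ an arbitrary finite group. If $P_e(G)\cong P_e(H)$, then $H$ is nilpotent.
   Context: All groups are finite. For a group $X$, the enhanced power graph $P_e(X)$ is the simple graph with vertex set $X$ in which two distinct vertices $x,y$ are adjacent if and only if the subgroup $\langle x,y\rangle$ is cyclic. *)

theory Defs
  imports "HOL-Algebra.Algebra"
begin

definition commutator_subgroup :: "('a, 'b) monoid_scheme \<Rightarrow> 'a set \<Rightarrow> 'a set \<Rightarrow> 'a set" where
  "commutator_subgroup G A B =
     generate G {a \<otimes>\<^bsub>G\<^esub> b \<otimes>\<^bsub>G\<^esub> inv\<^bsub>G\<^esub> a \<otimes>\<^bsub>G\<^esub> inv\<^bsub>G\<^esub> b | a b. a \<in> A \<and> b \<in> B}"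

fun lower_central :: "('a, 'b) monoid_scheme \<Rightarrow> nat \<Rightarrow> 'a set" where
  "lower_central G 0 = carrier G"
| "lower_central G (Suc n) = commutator_subgroup G (lower_central G n) (carrier G)"

definition nilpotent_group :: "('a, 'b) monoid_scheme \<Rightarrow> bool" where
  "nilpotent_group G \<longleftrightarrow> group G \<and> (\<exists>n. lower_central G n = {\<one>\<^bsub>G\<^esub>})"

definition epg_adj :: "('a, 'b) monoid_scheme \<Rightarrow> 'a \<Rightarrow> 'a \<Rightarrow> bool" where
  "epg_adj G x y \<longleftrightarrow> x \<noteq> y \<and> cyclic_group (subgroup_generated G {x, y})"

definition epg_iso :: "('a, 'b) monoid_scheme \<Rightarrow> ('c, 'd) monoid_scheme \<Rightarrow> bool" where
  "epg_iso G H \<longleftrightarrow> (\<exists>f. bij_betw f (carrier G) (carrier H) \<and>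
      (\<forall>x\<in>carrier G. \<forall>y\<in>carrier G. epg_adj G x y \<longleftrightarrow> epg_adj H (f x) (f y)))"

end

theory Submission
  imports Defs
begin

text \<open>
  In a finite group the closed neighbourhood of \<open>x\<close> in the enhanced power graph is the union of
  the cyclic subgroups containing \<open>x\<close>, so the set of vertices whose closed neighbourhood contains
  that of \<open>x\<close> is the intersection of the maximal cyclic subgroups containing \<open>x\<close>: a cyclic subgroup
  read off from the graph. The closed-twin class of \<open>x\<close> is this cyclic subgroup minus the smaller
  ones of the same kind, and a bijection between cyclic groups of equal order that preserves
  element orders matches these classes, together with their elements of \<open>p\<close>-power order. Hence
  graph-isomorphic groups have the same number of \<open>p\<close>-elements for every prime \<open>p\<close>.

  A finite group \<open>G\<close> is nilpotent iff it has at most \<open>|G|\<^sub>p\<close> elements of \<open>p\<close>-power order for every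
  \<open>p\<close>. In a nilpotent group elements of coprime orders commute (induction along the lower central
  series), so every Sylow subgroup is normal and contains all \<open>p\<close>-elements. Conversely, if there
  are at most \<open>|G|\<^sub>p\<close> of them, they form a normal Sylow subgroup; such subgroups for different
  primes commute elementwise, so the upper central series of each Sylow subgroup, which exhausts
  it because \<open>p\<close>-groups have nontrivial centre, lies in that of \<open>G\<close>, and the latter reaches \<open>G\<close>.
\<close>

section \<open>Subgroups of finite cyclic groups\<close>

context group begin

lemma subgroup_nat_pow_closed:
  assumes "subgroup H G" "h \<in> H" shows "h [^] (n::nat) \<in> H"
  using subgroup_int_pow_closed[OF assms, of "int n"] by (simp add: int_pow_int)

lemma generate_singleton_subset:
  assumes "c \<in> carrier G" "x \<in> generate G {c}"
  shows "generate G {x} \<subseteq> generate G {c}"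
  using assms by (intro generate_subgroup_incl) (auto intro: generate_is_subgroup)

lemma subgroup_of_cyclic:
  assumes fin: "finite (carrier G)" and c: "c \<in> carrier G"
    and D: "subgroup D G" "D \<subseteq> generate G {c}"
  shows "\<exists>d. 0 < d \<and> d dvd ord c \<and> (\<forall>k. c [^] k \<in> D \<longleftrightarrow> d dvd k) \<and> D = generate G {c [^] d}"
proof -
  have n0: "ord c > 0" using ord_ge_1[OF fin c] by simp
  have cn: "c [^] ord c \<in> D" using c subgroup.one_closed[OF D(1)] by simp
  define d where "d = (LEAST k::nat. 0 < k \<and> c [^] k \<in> D)"
  have d: "0 < d" "c [^] d \<in> D"
    unfolding d_def using LeastI[of "\<lambda>k::nat. 0 < k \<and> c [^] k \<in> D"] n0 cn by blast+
  have dmin: "\<And>k. 0 < k \<Longrightarrow> c [^] k \<in> D \<Longrightarrow> d \<le> k"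
    unfolding d_def by (rule Least_le) auto
  have key: "c [^] k \<in> D \<longleftrightarrow> d dvd k" for k :: nat
  proof
    assume ck: "c [^] k \<in> D"
    have "c [^] k = (c [^] d) [^] (k div d) \<otimes> c [^] (k mod d)"
      using c by (simp add: nat_pow_mult nat_pow_pow)
    hence "c [^] (k mod d) = inv ((c [^] d) [^] (k div d)) \<otimes> c [^] k"
      using c by (simp add: m_assoc[symmetric])
    moreover have "(c [^] d) [^] (k div d) \<in> D"
      using d D(1) by (simp add: subgroup_nat_pow_closed)
    ultimately have "c [^] (k mod d) \<in> D" using ck D(1)
      by (simp add: subgroup.m_closed subgroup.m_inv_closed)
    hence "k mod d = 0" using dmin d(1) by (meson leD mod_less_divisor neq0_conv)
    thus "d dvd k" by auto
  next
    assume "d dvd k"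
    then obtain q where "k = d * q" by auto
    thus "c [^] k \<in> D"
      using c subgroup_nat_pow_closed[OF D(1) d(2), of q] by (simp add: nat_pow_pow)
  qed
  have "D = generate G {c [^] d}"
  proof
    show "generate G {c [^] d} \<subseteq> D"
      using d D(1) by (simp add: generate_subgroup_incl)
    show "D \<subseteq> generate G {c [^] d}"
    proof
      fix y assume y: "y \<in> D"
      then obtain k :: nat where k: "y = c [^] k"
        using D(2) generate_pow_on_finite_carrier[OF fin c] by auto
      then obtain q where "k = d * q" using key y by auto
      hence "y = (c [^] d) [^] q" using k c by (simp add: nat_pow_pow)
      thus "y \<in> generate G {c [^] d}" using generate_pow_on_finite_carrier[OF fin] c by auto
    qed
  qed
  with d(1) key cn show ?thesis by blast
qed

corollary subgroup_of_cyclic_cyclic: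
  assumes fin: "finite (carrier G)" and c: "c \<in> carrier G"
    and D: "subgroup D G" "D \<subseteq> generate G {c}"
  obtains g where "g \<in> carrier G" "D = generate G {g}"
proof -
  obtain d :: nat where "D = generate G {c [^] d}"
    using subgroup_of_cyclic[OF assms] by blast
  moreover have "c [^] d \<in> carrier G" using c by simp
  ultimately show thesis by (intro that)
qed

lemma subgroup_of_cyclic_eq:
  assumes fin: "finite (carrier G)" and c: "c \<in> carrier G"
    and D: "subgroup D G" "D \<subseteq> generate G {c}"
  shows "D = {y \<in> generate G {c}. y [^] card D = \<one>}"
proof -
  obtain d where d: "0 < d" "d dvd ord c" "\<And>k. c [^] k \<in> D \<longleftrightarrow> d dvd k"
    and Dd: "D = generate G {c [^] d}"
    using subgroup_of_cyclic[OF assms] by auto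
  define e where "e = ord c div d"
  have de: "ord c = d * e" using d(2) e_def by simp
  have e0: "e > 0" using de ord_ge_1[OF fin c] by (simp add: gr0I)
  have cardD: "card D = e"
    using Dd generate_pow_card[of "c [^] d"] ord_pow[OF c d(2)] c d(1) e_def by simp
  have "c [^] k \<in> D \<longleftrightarrow> (c [^] k) [^] card D = \<one>" for k :: nat
  proof -
    have "(c [^] k) [^] card D = \<one> \<longleftrightarrow> d * e dvd k * e"
      using c cardD de by (simp add: nat_pow_pow pow_eq_id)
    also have "\<dots> \<longleftrightarrow> c [^] k \<in> D" using e0 d(3) by simp
    finally show ?thesis ..
  qed
  moreover have "D \<subseteq> generate G {c}" by fact
  ultimately show ?thesis using generate_pow_on_finite_carrier[OF fin c] by auto
qed

lemma bij_betw_pow_generate: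
  assumes fin: "finite (carrier G)" and c: "c \<in> carrier G"
  shows "bij_betw (\<lambda>k::nat. c [^] k) {0..ord c - 1} (generate G {c})"
proof -
  have "generate G {c} = {c [^] k | k. k \<in> {0..ord c - 1}}"
    using generate_pow_on_finite_carrier[OF fin c] ord_elems[OF fin c] by simp
  thus ?thesis unfolding bij_betw_def using ord_inj[OF c] by blast
qed

end

lemma bij_betw_image_Collect:
  assumes "bij_betw \<psi> A B" "\<And>y. y \<in> A \<Longrightarrow> Q (\<psi> y) \<longleftrightarrow> P y"
  shows "\<psi> ` {y \<in> A. P y} = {y \<in> B. Q y}"
  using assms unfolding bij_betw_def by fastforce

lemma card_bij_betw_Diff_Union:
  assumes \<psi>: "bij_betw \<psi> C C'" and \<D>: "\<And>D. D \<in> \<D> \<Longrightarrow> D \<subseteq> C"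
    and \<D>': "\<D>' = (\<lambda>D. \<psi> ` D) ` \<D>" and PQ: "\<And>y. y \<in> C \<Longrightarrow> Q (\<psi> y) \<longleftrightarrow> P y"
  shows "card {y \<in> C. y \<notin> \<Union>\<D> \<and> P y} = card {y \<in> C'. y \<notin> \<Union>\<D>' \<and> Q y}"
proof -
  have inj: "inj_on \<psi> C" using \<psi> by (rule bij_betw_imp_inj_on)
  have union: "\<psi> y \<in> \<Union>\<D>' \<longleftrightarrow> y \<in> \<Union>\<D>" if "y \<in> C" for y
  proof -
    have "\<psi> y \<in> \<Union>\<D>' \<longleftrightarrow> (\<exists>D\<in>\<D>. \<psi> y \<in> \<psi> ` D)" unfolding \<D>' by simp
    also have "\<dots> \<longleftrightarrow> (\<exists>D\<in>\<D>. y \<in> D)" using inj_on_image_mem_iff[OF inj that \<D>] by simp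
    finally show ?thesis by simp
  qed
  have "inj_on \<psi> {y \<in> C. y \<notin> \<Union>\<D> \<and> P y}" using inj by (rule inj_on_subset) blast
  hence "card {y \<in> C. y \<notin> \<Union>\<D> \<and> P y} = card (\<psi> ` {y \<in> C. y \<notin> \<Union>\<D> \<and> P y})"
    by (rule card_image[symmetric])
  also have "\<psi> ` {y \<in> C. y \<notin> \<Union>\<D> \<and> P y} = {y \<in> C'. y \<notin> \<Union>\<D>' \<and> Q y}"
    by (rule bij_betw_image_Collect[OF \<psi>]) (simp only: union PQ)
  finally show ?thesis .
qed

lemma cyclic_order_preserving_bij:
  assumes G: "group G" and H: "group H" and fG: "finite (carrier G)" and fH: "finite (carrier H)"
    and c: "c \<in> carrier G" and c': "c' \<in> carrier H" and ord: "group.ord G c = group.ord H c'"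
  obtains \<psi> where "bij_betw \<psi> (generate G {c}) (generate H {c'})"
    "\<And>y m. y \<in> generate G {c} \<Longrightarrow> \<psi> y [^]\<^bsub>H\<^esub> (m::nat) = \<one>\<^bsub>H\<^esub> \<longleftrightarrow> y [^]\<^bsub>G\<^esub> m = \<one>\<^bsub>G\<^esub>"
proof -
  interpret G: group G by fact
  interpret H: group H by fact
  define I where "I = {0..G.ord c - 1}"
  have bG: "bij_betw (\<lambda>k::nat. c [^]\<^bsub>G\<^esub> k) I (generate G {c})"
    unfolding I_def by (rule G.bij_betw_pow_generate[OF fG c])
  have bH: "bij_betw (\<lambda>k::nat. c' [^]\<^bsub>H\<^esub> k) I (generate H {c'})"
    unfolding I_def ord by (rule H.bij_betw_pow_generate[OF fH c'])
  define \<psi> where "\<psi> = (\<lambda>k. c' [^]\<^bsub>H\<^esub> k) \<circ> the_inv_into I (\<lambda>k. c [^]\<^bsub>G\<^esub> k)"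
  have "bij_betw \<psi> (generate G {c}) (generate H {c'})"
    unfolding \<psi>_def using bij_betw_trans[OF bij_betw_the_inv_into[OF bG] bH] .
  moreover have "\<psi> y [^]\<^bsub>H\<^esub> m = \<one>\<^bsub>H\<^esub> \<longleftrightarrow> y [^]\<^bsub>G\<^esub> m = \<one>\<^bsub>G\<^esub>"
    if y: "y \<in> generate G {c}" for y and m :: nat
  proof -
    obtain k where k: "k \<in> I" "y = c [^]\<^bsub>G\<^esub> k" using y bG unfolding bij_betw_def by auto
    have "\<psi> y = c' [^]\<^bsub>H\<^esub> k"
      unfolding \<psi>_def using k bG by (simp add: bij_betw_def the_inv_into_f_f)
    hence "\<psi> y [^]\<^bsub>H\<^esub> m = \<one>\<^bsub>H\<^esub> \<longleftrightarrow> G.ord c dvd k * m"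
      using c' ord by (simp add: H.nat_pow_pow H.pow_eq_id)
    also have "\<dots> \<longleftrightarrow> y [^]\<^bsub>G\<^esub> m = \<one>\<^bsub>G\<^esub>"
      using c k by (simp add: G.nat_pow_pow G.pow_eq_id)
    finally show ?thesis .
  qed
  ultimately show thesis by (rule that)
qed

lemma order_preserving_bij_subgroup_image:
  assumes G: "group G" and H: "group H" and fG: "finite (carrier G)" and fH: "finite (carrier H)"
    and c: "c \<in> carrier G" and c': "c' \<in> carrier H"
    and \<psi>: "bij_betw \<psi> (generate G {c}) (generate H {c'})"
    and pow: "\<And>y m. y \<in> generate G {c} \<Longrightarrow> \<psi> y [^]\<^bsub>H\<^esub> (m::nat) = \<one>\<^bsub>H\<^esub> \<longleftrightarrow> y [^]\<^bsub>G\<^esub> m = \<one>\<^bsub>G\<^esub>"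
    and D: "subgroup D G" "D \<subseteq> generate G {c}"
    and D': "subgroup D' H" "D' \<subseteq> generate H {c'}"
    and card: "card D = card D'"
  shows "\<psi> ` D = D'"
proof -
  have "D = {y \<in> generate G {c}. y [^]\<^bsub>G\<^esub> card D = \<one>\<^bsub>G\<^esub>}"
    using group.subgroup_of_cyclic_eq[OF G fG c D] .
  also have "\<psi> ` \<dots> = {y \<in> generate H {c'}. y [^]\<^bsub>H\<^esub> card D' = \<one>\<^bsub>H\<^esub>}"
    using bij_betw_image_Collect[OF \<psi>] pow card by simp
  also have "\<dots> = D'"
    using group.subgroup_of_cyclic_eq[OF H fH c' D'] by simp
  finally show ?thesis .
qed

section \<open>Closed neighbourhoods in the enhanced power graph\<close>

definition epg_nbhd :: "('a, 'b) monoid_scheme \<Rightarrow> 'a \<Rightarrow> 'a set" where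
  "epg_nbhd G x = {y \<in> carrier G. y = x \<or> epg_adj G x y}"

definition epg_dominators :: "('a, 'b) monoid_scheme \<Rightarrow> 'a \<Rightarrow> 'a set" where
  "epg_dominators G x = {y \<in> carrier G. epg_nbhd G x \<subseteq> epg_nbhd G y}"

definition maximal_cyclic :: "('a, 'b) monoid_scheme \<Rightarrow> 'a \<Rightarrow> bool" where
  "maximal_cyclic G g \<longleftrightarrow> g \<in> carrier G \<and>
     (\<forall>h\<in>carrier G. generate G {g} \<subseteq> generate G {h} \<longrightarrow> generate G {h} = generate G {g})"

lemma epg_dominators_subset: "epg_dominators G x \<subseteq> carrier G"
  unfolding epg_dominators_def by auto

lemma epg_dominators_self: "x \<in> carrier G \<Longrightarrow> x \<in> epg_dominators G x"
  unfolding epg_dominators_def by auto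

lemma epg_dominators_trans: "y \<in> epg_dominators G x \<Longrightarrow> epg_dominators G y \<subseteq> epg_dominators G x"
  unfolding epg_dominators_def by auto

text \<open>Since \<open>epg_dominators G y = epg_dominators G x\<close> iff \<open>epg_nbhd G y = epg_nbhd G x\<close>, the
  left-hand side is the closed-twin class of \<open>x\<close>.\<close>

lemma epg_twins_eq:
  assumes "x \<in> carrier G"
  shows "{y \<in> carrier G. epg_dominators G y = epg_dominators G x} =
    epg_dominators G x - \<Union>{epg_dominators G z | z. z \<in> carrier G \<and> epg_dominators G z \<subset> epg_dominators G x}"
    (is "?T = _ - \<Union>?D")
proof (intro equalityI subsetI)
  fix y assume "y \<in> ?T"
  hence y: "y \<in> carrier G" "epg_dominators G y = epg_dominators G x" by auto
  have "y \<notin> D" if D: "D \<in> ?D" for D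
  proof
    assume yD: "y \<in> D"
    obtain z where z: "D = epg_dominators G z" "epg_dominators G z \<subset> epg_dominators G x"
      using D by blast
    have "epg_dominators G y \<subseteq> epg_dominators G z"
      using epg_dominators_trans[of y G z] yD z(1) by simp
    thus False using y(2) z(2) by simp
  qed
  thus "y \<in> epg_dominators G x - \<Union>?D"
    using y epg_dominators_self[OF y(1)] by auto
next
  fix y assume y: "y \<in> epg_dominators G x - \<Union>?D"
  hence yx: "y \<in> epg_dominators G x" by (rule DiffD1)
  hence yc: "y \<in> carrier G" using epg_dominators_subset[of G x] by (rule subsetD[rotated])
  have "epg_dominators G y \<notin> ?D"
    using y epg_dominators_self[OF yc] by (auto simp del: psubset_eq)
  hence "\<not> epg_dominators G y \<subset> epg_dominators G x" using yc by blast
  moreover have "epg_dominators G y \<subseteq> epg_dominators G x"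
    using epg_dominators_trans[OF yx] .
  ultimately show "y \<in> ?T" using yc by auto
qed

context group begin

lemma cyclic_subgroup_generated_pair_iff:
  assumes fin: "finite (carrier G)" and x: "x \<in> carrier G" and y: "y \<in> carrier G"
  shows "cyclic_group (subgroup_generated G {x, y}) \<longleftrightarrow>
         (\<exists>c\<in>carrier G. x \<in> generate G {c} \<and> y \<in> generate G {c})"
proof
  assume "cyclic_group (subgroup_generated G {x, y})"
  then obtain g where g: "g \<in> carrier (subgroup_generated G {x, y})"
     and eq: "subgroup_generated (subgroup_generated G {x, y}) {g} = subgroup_generated G {x, y}"
    unfolding cyclic_group_def by blast
  have xy: "carrier G \<inter> {x, y} = {x, y}" using x y by auto
  have cs: "carrier (subgroup_generated G {x, y}) = generate G {x, y}"
    using xy by (simp add: carrier_subgroup_generated)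
  have sg: "subgroup (generate G {x, y}) G" using x y by (simp add: generate_is_subgroup)
  have "carrier (subgroup_generated (subgroup_generated G {x, y}) {g})
        = generate (subgroup_generated G {x, y}) {g}"
    using g by (simp add: carrier_subgroup_generated Int_absorb1)
  also have "\<dots> = generate (G\<lparr>carrier := generate G {x, y}\<rparr>) {g}"
    using xy by (simp add: subgroup_generated_def)
  also have "\<dots> = generate G {g}"
    using g cs sg by (intro generate_consistent) auto
  finally have "generate G {g} = generate G {x, y}" using eq cs by simp
  moreover have "g \<in> carrier G" using g cs generate_incl[of "{x,y}"] x y by auto
  ultimately show "\<exists>c\<in>carrier G. x \<in> generate G {c} \<and> y \<in> generate G {c}"
    by (metis generate.incl insertI1 insert_commute)
next
  assume "\<exists>c\<in>carrier G. x \<in> generate G {c} \<and> y \<in> generate G {c}"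
  then obtain c where c: "c \<in> carrier G" "x \<in> generate G {c}" "y \<in> generate G {c}" by blast
  have sub: "generate G {x, y} \<subseteq> generate G {c}"
    using c by (intro generate_subgroup_incl) (auto intro: generate_is_subgroup)
  have sg: "subgroup (generate G {x, y}) G" using x y generate_is_subgroup by auto
  obtain g where g: "g \<in> carrier G" "generate G {x, y} = generate G {g}"
    by (rule subgroup_of_cyclic_cyclic[OF fin c(1) sg sub])
  have "carrier G \<inter> {x, y} = {x, y}" "carrier G \<inter> {g} = {g}" using x y g by auto
  hence "subgroup_generated G {x, y} = subgroup_generated G {g}"
    unfolding subgroup_generated_def using g by simp
  thus "cyclic_group (subgroup_generated G {x, y})" using cyclic_group_generated by simp
qed

lemma epg_nbhd_eq:
  assumes fin: "finite (carrier G)" and x: "x \<in> carrier G"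
  shows "epg_nbhd G x = {y \<in> carrier G. \<exists>c\<in>carrier G. x \<in> generate G {c} \<and> y \<in> generate G {c}}"
proof -
  have "(y = x \<or> epg_adj G x y) \<longleftrightarrow> (\<exists>c\<in>carrier G. x \<in> generate G {c} \<and> y \<in> generate G {c})"
    if y: "y \<in> carrier G" for y
  proof (cases "y = x")
    case True
    then show ?thesis using x by (auto intro: generate.incl)
  next
    case False
    then show ?thesis using cyclic_subgroup_generated_pair_iff[OF fin x y] by (simp add: epg_adj_def)
  qed
  thus ?thesis unfolding epg_nbhd_def by auto
qed

lemma ex_maximal_cyclic:
  assumes fin: "finite (carrier G)" and c: "c \<in> carrier G"
  obtains g where "maximal_cyclic G g" "generate G {c} \<subseteq> generate G {g}"
proof -
  let ?P = "\<lambda>g. g \<in> carrier G \<and> generate G {c} \<subseteq> generate G {g}"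
  have "\<forall>y. ?P y \<longrightarrow> card (generate G {y}) < card (carrier G) + 1"
    using fin by (auto intro!: le_imp_less_Suc card_mono generate_incl)
  then obtain g where g: "?P g"
    and gm: "\<forall>y. ?P y \<longrightarrow> card (generate G {y}) \<le> card (generate G {g})"
    using ex_has_greatest_nat[of ?P c "\<lambda>g. card (generate G {g})"] c by blast
  have "maximal_cyclic G g"
    unfolding maximal_cyclic_def
  proof (intro conjI ballI impI)
    show "g \<in> carrier G" using g by simp
    fix h assume h: "h \<in> carrier G" "generate G {g} \<subseteq> generate G {h}"
    have "finite (generate G {h})"
      using fin h generate_incl[of "{h}"] finite_subset by auto
    moreover have "card (generate G {h}) \<le> card (generate G {g})" using gm g h by blast
    ultimately have "generate G {g} = generate G {h}"
      using h(2) by (intro card_seteq)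
    thus "generate G {h} = generate G {g}" ..
  qed
  with that g show thesis by blast
qed

lemma epg_dominators_eq_Inter:
  assumes fin: "finite (carrier G)" and x: "x \<in> carrier G"
  shows "epg_dominators G x = \<Inter>{generate G {g} | g. maximal_cyclic G g \<and> x \<in> generate G {g}}"
proof (intro equalityI subsetI InterI)
  fix y M assume y: "y \<in> epg_dominators G x"
    and "M \<in> {generate G {g} | g. maximal_cyclic G g \<and> x \<in> generate G {g}}"
  then obtain g where g: "maximal_cyclic G g" "x \<in> generate G {g}" "M = generate G {g}" by blast
  have gc: "g \<in> carrier G" using g(1) unfolding maximal_cyclic_def by blast
  have "g \<in> epg_nbhd G x" using epg_nbhd_eq[OF fin x] gc g by (auto intro: generate.incl)
  hence "g \<in> epg_nbhd G y" using y unfolding epg_dominators_def by blast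
  moreover have yc: "y \<in> carrier G" using y epg_dominators_subset[of G x] by blast
  ultimately obtain c where c: "c \<in> carrier G" "y \<in> generate G {c}" "g \<in> generate G {c}"
    using epg_nbhd_eq[OF fin yc] by auto
  have "generate G {c} = generate G {g}"
    using g(1) c generate_singleton_subset unfolding maximal_cyclic_def by blast
  thus "y \<in> M" using c g by simp
next
  fix y assume y: "y \<in> \<Inter>{generate G {g} | g. maximal_cyclic G g \<and> x \<in> generate G {g}}"
  have max: "y \<in> generate G {g}" if "maximal_cyclic G g" "generate G {c} \<subseteq> generate G {g}"
    "x \<in> generate G {c}" for g c
  proof -
    have "generate G {g} \<in> {generate G {g} | g. maximal_cyclic G g \<and> x \<in> generate G {g}}"
      using that by blast
    thus ?thesis using y by (rule InterD[rotated])
  qed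
  obtain g0 where "maximal_cyclic G g0" "generate G {x} \<subseteq> generate G {g0}"
    using ex_maximal_cyclic[OF fin x] by blast
  hence yc: "y \<in> carrier G"
    using max[of g0 x] generate_incl[of "{g0}"] x generate.incl[of x "{x}" G]
    unfolding maximal_cyclic_def by blast
  have "w \<in> epg_nbhd G y" if w: "w \<in> epg_nbhd G x" for w
  proof -
    obtain c where c: "c \<in> carrier G" "x \<in> generate G {c}" "w \<in> generate G {c}"
      using w epg_nbhd_eq[OF fin x] by auto
    obtain g where g: "maximal_cyclic G g" "generate G {c} \<subseteq> generate G {g}"
      using ex_maximal_cyclic[OF fin c(1)] by blast
    have "g \<in> carrier G" using g(1) unfolding maximal_cyclic_def by blast
    moreover have "w \<in> carrier G" using w unfolding epg_nbhd_def by blast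
    ultimately show ?thesis using epg_nbhd_eq[OF fin yc] max[OF g c(2)] g c by blast
  qed
  thus "y \<in> epg_dominators G x" using yc unfolding epg_dominators_def by blast
qed

lemma subgroup_epg_dominators:
  assumes fin: "finite (carrier G)" and x: "x \<in> carrier G"
  shows "subgroup (epg_dominators G x) G"
proof -
  obtain g where "maximal_cyclic G g" "generate G {x} \<subseteq> generate G {g}"
    using ex_maximal_cyclic[OF fin x] by blast
  hence "generate G {g} \<in> {generate G {g} | g. maximal_cyclic G g \<and> x \<in> generate G {g}}"
    using generate.incl[of x "{x}" G] by blast
  hence "{generate G {g} | g. maximal_cyclic G g \<and> x \<in> generate G {g}} \<noteq> {}" by blast
  moreover have "subgroup (generate G {g}) G" if "maximal_cyclic G g" for g
    using that generate_is_subgroup unfolding maximal_cyclic_def by simp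
  ultimately show ?thesis
    unfolding epg_dominators_eq_Inter[OF fin x] by (auto intro: subgroups_Inter)
qed

lemma epg_dominators_cyclic:
  assumes fin: "finite (carrier G)" and x: "x \<in> carrier G"
  obtains c where "c \<in> carrier G" "epg_dominators G x = generate G {c}"
proof -
  obtain g where g: "maximal_cyclic G g" "generate G {x} \<subseteq> generate G {g}"
    using ex_maximal_cyclic[OF fin x] by blast
  hence "epg_dominators G x \<subseteq> generate G {g}"
    using epg_dominators_eq_Inter[OF fin x] generate.incl[of x "{x}" G] by blast
  moreover have "g \<in> carrier G" using g(1) unfolding maximal_cyclic_def by blast
  ultimately show thesis
    using subgroup_of_cyclic_cyclic[OF fin _ subgroup_epg_dominators[OF fin x]] that by blast
qed

end

section \<open>Enhanced power graph isomorphisms preserve the number of \<open>p\<close>-elements\<close>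

lemma inj_on_image_subset_iff:
  assumes "inj_on f C" "A \<subseteq> C" "B \<subseteq> C"
  shows "f ` A \<subseteq> f ` B \<longleftrightarrow> A \<subseteq> B"
proof
  assume "f ` A \<subseteq> f ` B"
  thus "A \<subseteq> B" using assms by (auto dest: inj_onD)
qed auto

locale epg_iso_map = G: group G + H: group H
  for G :: "('a, 'b) monoid_scheme" and H :: "('c, 'd) monoid_scheme" and f :: "'a \<Rightarrow> 'c" +
  assumes finite_G: "finite (carrier G)" and finite_H: "finite (carrier H)"
    and bij: "bij_betw f (carrier G) (carrier H)"
    and adj_iff: "\<And>x y. x \<in> carrier G \<Longrightarrow> y \<in> carrier G \<Longrightarrow> epg_adj H (f x) (f y) \<longleftrightarrow> epg_adj G x y"
begin

lemma inj: "inj_on f (carrier G)"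
  using bij by (rule bij_betw_imp_inj_on)

lemma image_carrier: "f ` carrier G = carrier H"
  using bij by (rule bij_betw_imp_surj_on)

lemma f_closed: "x \<in> carrier G \<Longrightarrow> f x \<in> carrier H"
  using image_carrier by blast

lemma epg_nbhd_image:
  assumes x: "x \<in> carrier G"
  shows "f ` epg_nbhd G x = epg_nbhd H (f x)"
proof -
  have "y = x \<or> epg_adj G x y \<longleftrightarrow> f y = f x \<or> epg_adj H (f x) (f y)" if "y \<in> carrier G" for y
    using inj x that adj_iff[OF x that] by (auto dest: inj_onD)
  hence "epg_nbhd G x = {y \<in> carrier G. f y = f x \<or> epg_adj H (f x) (f y)}"
    unfolding epg_nbhd_def by blast
  hence "f ` epg_nbhd G x = f ` {y \<in> carrier G. f y = f x \<or> epg_adj H (f x) (f y)}"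
    by simp
  also have "\<dots> = epg_nbhd H (f x)"
    unfolding epg_nbhd_def image_carrier[symmetric] Compr_image_eq ..
  finally show ?thesis .
qed

lemma epg_dominators_image:
  assumes x: "x \<in> carrier G"
  shows "f ` epg_dominators G x = epg_dominators H (f x)"
proof -
  have nbhd: "epg_nbhd G z \<subseteq> carrier G" for z
    unfolding epg_nbhd_def by auto
  have "epg_nbhd H (f x) \<subseteq> epg_nbhd H (f y) \<longleftrightarrow> epg_nbhd G x \<subseteq> epg_nbhd G y"
    if "y \<in> carrier G" for y
    using epg_nbhd_image[OF x] epg_nbhd_image[OF that] inj_on_image_subset_iff[OF inj nbhd nbhd]
    by metis
  hence "epg_dominators G x = {y \<in> carrier G. epg_nbhd H (f x) \<subseteq> epg_nbhd H (f y)}"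
    unfolding epg_dominators_def by blast
  thus ?thesis
    unfolding epg_dominators_def image_carrier[symmetric] Compr_image_eq by simp
qed

lemma image_proper_epg_dominators:
  assumes x: "x \<in> carrier G"
  shows "(\<lambda>D. f ` D) ` {epg_dominators G z | z. z \<in> carrier G \<and> epg_dominators G z \<subset> epg_dominators G x}
    = {epg_dominators H z | z. z \<in> carrier H \<and> epg_dominators H z \<subset> epg_dominators H (f x)}"
proof -
  have proper: "epg_dominators H (f z) \<subset> epg_dominators H (f x) \<longleftrightarrow>
      epg_dominators G z \<subset> epg_dominators G x" if z: "z \<in> carrier G" for z
  proof -
    have "f ` epg_dominators G z \<subset> f ` epg_dominators G x \<longleftrightarrow> epg_dominators G z \<subset> epg_dominators G x"
      using inj_on_image_subset_iff[OF inj epg_dominators_subset epg_dominators_subset]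
      by (simp add: less_le_not_le)
    thus ?thesis by (simp only: epg_dominators_image[OF x] epg_dominators_image[OF z])
  qed
  show ?thesis
  proof (intro equalityI subsetI)
    fix D' assume "D' \<in> (\<lambda>D. f ` D) ` {epg_dominators G z | z. z \<in> carrier G \<and>
      epg_dominators G z \<subset> epg_dominators G x}"
    then obtain z where z: "z \<in> carrier G" "epg_dominators G z \<subset> epg_dominators G x"
      "D' = f ` epg_dominators G z"
      by blast
    have "D' = epg_dominators H (f z)" using z(3) epg_dominators_image[OF z(1)] by simp
    moreover have "epg_dominators H (f z) \<subset> epg_dominators H (f x)"
      using proper[OF z(1)] z(2) by simp
    ultimately show "D' \<in> {epg_dominators H z | z. z \<in> carrier H \<and>
      epg_dominators H z \<subset> epg_dominators H (f x)}"
      using f_closed[OF z(1)] by (intro CollectI exI[of _ "f z"]) simp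
  next
    fix D' assume "D' \<in> {epg_dominators H z | z. z \<in> carrier H \<and>
      epg_dominators H z \<subset> epg_dominators H (f x)}"
    then obtain z' where z': "z' \<in> carrier H" "epg_dominators H z' \<subset> epg_dominators H (f x)"
      "D' = epg_dominators H z'"
      by blast
    then obtain z where z: "z \<in> carrier G" "z' = f z" using image_carrier by blast
    have "epg_dominators G z \<subset> epg_dominators G x"
      using proper[OF z(1)] z z'(2) by simp
    hence "epg_dominators G z \<in> {epg_dominators G z | z. z \<in> carrier G \<and>
      epg_dominators G z \<subset> epg_dominators G x}"
      using z(1) by (intro CollectI exI[of _ z]) simp
    moreover have "D' = f ` epg_dominators G z" using z z'(3) epg_dominators_image[OF z(1)] by simp
    ultimately show "D' \<in> (\<lambda>D. f ` D) ` {epg_dominators G z | z. z \<in> carrier G \<and>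
      epg_dominators G z \<subset> epg_dominators G x}"
      by (rule rev_image_eqI)
  qed
qed

end

definition p_elements :: "('a, 'b) monoid_scheme \<Rightarrow> nat \<Rightarrow> 'a set" where
  "p_elements G p = {y \<in> carrier G. \<exists>k. y [^]\<^bsub>G\<^esub> (p ^ k) = \<one>\<^bsub>G\<^esub>}"

lemma p_elements_subset: "p_elements G p \<subseteq> carrier G"
  unfolding p_elements_def by auto

context epg_iso_map begin

lemma card_image_f: "A \<subseteq> carrier G \<Longrightarrow> card (f ` A) = card A"
  using inj by (meson card_image inj_on_subset)

text \<open>The dominators of \<open>x\<close> and of \<open>f x\<close> form cyclic groups of the same order; a bijection
  between them preserving element orders maps each subgroup to the one of the same order, in
  particular each dominator subgroup \<open>D\<close> to \<open>f ` D\<close>.\<close>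

lemma order_preserving_bij_epg_dominators:
  assumes x: "x \<in> carrier G"
  obtains \<psi> where "bij_betw \<psi> (epg_dominators G x) (epg_dominators H (f x))"
    "\<And>y m. y \<in> epg_dominators G x \<Longrightarrow>
      \<psi> y [^]\<^bsub>H\<^esub> (m::nat) = \<one>\<^bsub>H\<^esub> \<longleftrightarrow> y [^]\<^bsub>G\<^esub> m = \<one>\<^bsub>G\<^esub>"
    "\<And>z. z \<in> carrier G \<Longrightarrow> epg_dominators G z \<subseteq> epg_dominators G x \<Longrightarrow>
      \<psi> ` epg_dominators G z = f ` epg_dominators G z"
proof -
  define C where "C = epg_dominators G x"
  have CG: "C \<subseteq> carrier G" unfolding C_def by (rule epg_dominators_subset)
  obtain c where c: "c \<in> carrier G" "C = generate G {c}"
    using G.epg_dominators_cyclic[OF finite_G x] unfolding C_def by blast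
  obtain c' where c': "c' \<in> carrier H" "f ` C = generate H {c'}"
    using H.epg_dominators_cyclic[OF finite_H f_closed[OF x]] epg_dominators_image[OF x]
    unfolding C_def by metis
  have "G.ord c = H.ord c'"
    using c c' card_image_f[OF CG] G.generate_pow_card H.generate_pow_card by simp
  then obtain \<psi> where \<psi>: "bij_betw \<psi> (generate G {c}) (generate H {c'})"
    and pow: "\<And>y m. y \<in> generate G {c} \<Longrightarrow> \<psi> y [^]\<^bsub>H\<^esub> (m::nat) = \<one>\<^bsub>H\<^esub> \<longleftrightarrow> y [^]\<^bsub>G\<^esub> m = \<one>\<^bsub>G\<^esub>"
    using cyclic_order_preserving_bij[OF G.is_group H.is_group finite_G finite_H c(1) c'(1)]
    by blast
  have "\<psi> ` epg_dominators G z = f ` epg_dominators G z"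
    if z: "z \<in> carrier G" "epg_dominators G z \<subseteq> C" for z
  proof (rule order_preserving_bij_subgroup_image
      [OF G.is_group H.is_group finite_G finite_H c(1) c'(1) \<psi> pow])
    show "subgroup (epg_dominators G z) G" by (rule G.subgroup_epg_dominators[OF finite_G z(1)])
    show "subgroup (f ` epg_dominators G z) H"
      using H.subgroup_epg_dominators[OF finite_H f_closed[OF z(1)]] epg_dominators_image[OF z(1)]
      by simp
    show "epg_dominators G z \<subseteq> generate G {c}" using z(2) c by blast
    show "f ` epg_dominators G z \<subseteq> generate H {c'}" using z(2) c' by blast
    show "card (epg_dominators G z) = card (f ` epg_dominators G z)"
      using card_image_f z(2) CG by simp
  qed
  with that \<psi> pow c c' show thesis
    unfolding C_def epg_dominators_image[OF x] by simp
qed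

text \<open>Inside the cyclic group \<open>C\<close> of dominators of \<open>x\<close>, the twin class of \<open>x\<close> is what remains
  of \<open>C\<close> after removing the proper dominator subgroups, and these correspond to those of
  \<open>f x\<close>.\<close>

lemma card_twins_p_elements_eq:
  assumes x: "x \<in> carrier G"
  shows "card ({y \<in> carrier G. epg_dominators G y = epg_dominators G x} \<inter> p_elements G p) =
         card ({y \<in> carrier H. epg_dominators H y = epg_dominators H (f x)} \<inter> p_elements H p)"
proof -
  have fx: "f x \<in> carrier H" using f_closed[OF x] .
  define C where "C = epg_dominators G x"
  define C' where "C' = epg_dominators H (f x)"
  define \<D> where "\<D> = {epg_dominators G z | z. z \<in> carrier G \<and> epg_dominators G z \<subset> C}"
  define \<D>' where "\<D>' = {epg_dominators H z | z. z \<in> carrier H \<and> epg_dominators H z \<subset> C'}"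
  have CG: "C \<subseteq> carrier G" unfolding C_def by (rule epg_dominators_subset)
  obtain \<psi> where \<psi>: "bij_betw \<psi> C C'"
    and pow: "\<And>y m. y \<in> C \<Longrightarrow> \<psi> y [^]\<^bsub>H\<^esub> (m::nat) = \<one>\<^bsub>H\<^esub> \<longleftrightarrow> y [^]\<^bsub>G\<^esub> m = \<one>\<^bsub>G\<^esub>"
    and \<psi>_dom: "\<And>z. z \<in> carrier G \<Longrightarrow> epg_dominators G z \<subseteq> C \<Longrightarrow>
      \<psi> ` epg_dominators G z = f ` epg_dominators G z"
    using order_preserving_bij_epg_dominators[OF x] unfolding C_def C'_def by blast
  have "\<D>' = (\<lambda>D. f ` D) ` \<D>"
    unfolding \<D>_def \<D>'_def C_def C'_def using image_proper_epg_dominators[OF x] by simp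
  also have "\<dots> = (\<lambda>D. \<psi> ` D) ` \<D>"
  proof (rule image_cong[OF refl])
    fix D assume "D \<in> \<D>"
    then obtain z where "z \<in> carrier G" "D = epg_dominators G z" "epg_dominators G z \<subset> C"
      unfolding \<D>_def by blast
    thus "f ` D = \<psi> ` D" using \<psi>_dom[of z] by simp
  qed
  finally have \<D>': "\<D>' = (\<lambda>D. \<psi> ` D) ` \<D>" .
  have pel: "\<psi> y \<in> p_elements H p \<longleftrightarrow> y \<in> p_elements G p" if y: "y \<in> C" for y
  proof -
    have "\<psi> y \<in> carrier H"
      using bij_betwE[OF \<psi>] y epg_dominators_subset[of H "f x"] unfolding C'_def by blast
    moreover have "y \<in> carrier G" using y CG by blast
    ultimately show ?thesis unfolding p_elements_def by (simp add: pow[OF y])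
  qed
  define T where "T = {y \<in> carrier G. epg_dominators G y = epg_dominators G x}"
  define T' where "T' = {y \<in> carrier H. epg_dominators H y = epg_dominators H (f x)}"
  have "T = C - \<Union>\<D>"
    unfolding T_def C_def \<D>_def by (rule epg_twins_eq[OF x])
  hence "T \<inter> p_elements G p = {y \<in> C. y \<notin> \<Union>\<D> \<and> y \<in> p_elements G p}" by auto
  moreover have "T' = C' - \<Union>\<D>'"
    unfolding T'_def C'_def \<D>'_def by (rule epg_twins_eq[OF fx])
  hence "T' \<inter> p_elements H p = {y \<in> C'. y \<notin> \<Union>\<D>' \<and> y \<in> p_elements H p}" by auto
  moreover have "card {y \<in> C. y \<notin> \<Union>\<D> \<and> y \<in> p_elements G p} =
      card {y \<in> C'. y \<notin> \<Union>\<D>' \<and> y \<in> p_elements H p}"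
  proof (rule card_bij_betw_Diff_Union[OF \<psi> _ \<D>'])
    show "D \<subseteq> C" if "D \<in> \<D>" for D using that unfolding \<D>_def by blast
  qed (rule pel)
  ultimately show ?thesis unfolding T_def T'_def by simp
qed

lemma card_p_elements_eq: "card (p_elements G p) = card (p_elements H p)"
proof -
  define \<C> where "\<C> = epg_dominators G ` carrier G"
  define \<C>' where "\<C>' = epg_dominators H ` carrier H"
  define E where "E C = {y \<in> carrier G. epg_dominators G y = C} \<inter> p_elements G p" for C
  define E' where "E' C = {y \<in> carrier H. epg_dominators H y = C} \<inter> p_elements H p" for C
  have "p_elements G p = \<Union>(E ` \<C>)"
    using p_elements_subset[of G p] unfolding E_def \<C>_def by blast
  moreover have "card (\<Union>(E ` \<C>)) = (\<Sum>C\<in>\<C>. card (E C))"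
    by (rule card_UN_disjoint) (use finite_G in \<open>auto simp: \<C>_def E_def\<close>)
  ultimately have cardG: "card (p_elements G p) = (\<Sum>C\<in>\<C>. card (E C))" by simp
  have "p_elements H p = \<Union>(E' ` \<C>')"
    using p_elements_subset[of H p] unfolding E'_def \<C>'_def by blast
  moreover have "card (\<Union>(E' ` \<C>')) = (\<Sum>C\<in>\<C>'. card (E' C))"
    by (rule card_UN_disjoint) (use finite_H in \<open>auto simp: \<C>'_def E'_def\<close>)
  ultimately have cardH: "card (p_elements H p) = (\<Sum>C\<in>\<C>'. card (E' C))" by simp
  have "bij_betw (\<lambda>C. f ` C) \<C> \<C>'"
  proof (rule bij_betw_imageI)
    show "inj_on (\<lambda>C. f ` C) \<C>"
      unfolding \<C>_def using inj_on_image_eq_iff[OF inj epg_dominators_subset epg_dominators_subset]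
      by (auto intro: inj_onI)
    show "(\<lambda>C. f ` C) ` \<C> = \<C>'"
      unfolding \<C>_def \<C>'_def image_image epg_dominators_image image_carrier[symmetric]
      by (auto simp: epg_dominators_image)
  qed
  hence "(\<Sum>C\<in>\<C>'. card (E' C)) = (\<Sum>C\<in>\<C>. card (E' (f ` C)))"
    by (rule sum.reindex_bij_betw[symmetric])
  also have "\<dots> = (\<Sum>C\<in>\<C>. card (E C))"
  proof (rule sum.cong[OF refl])
    fix C assume "C \<in> \<C>"
    then obtain x where "x \<in> carrier G" "C = epg_dominators G x" unfolding \<C>_def by blast
    thus "card (E' (f ` C)) = card (E C)"
      using card_twins_p_elements_eq epg_dominators_image unfolding E_def E'_def by simp
  qed
  finally show ?thesis using cardG cardH by simp
qed

end

section \<open>Nilpotent groups have normal Sylow subgroups\<close>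

abbreviation commutator :: "('a, 'b) monoid_scheme \<Rightarrow> 'a \<Rightarrow> 'a \<Rightarrow> 'a" where
  "commutator G a b \<equiv> a \<otimes>\<^bsub>G\<^esub> b \<otimes>\<^bsub>G\<^esub> inv\<^bsub>G\<^esub> a \<otimes>\<^bsub>G\<^esub> inv\<^bsub>G\<^esub> b"

context group begin

lemma inv_mult_cancel: "x \<in> carrier G \<Longrightarrow> y \<in> carrier G \<Longrightarrow> inv x \<otimes> (x \<otimes> y) = y"
  by (simp add: m_assoc[symmetric])

lemma mult_inv_cancel: "x \<in> carrier G \<Longrightarrow> y \<in> carrier G \<Longrightarrow> x \<otimes> (inv x \<otimes> y) = y"
  by (simp add: m_assoc[symmetric])

lemma commutator_eq_one_iff:
  assumes a: "a \<in> carrier G" and b: "b \<in> carrier G"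
  shows "commutator G a b = \<one> \<longleftrightarrow> a \<otimes> b = b \<otimes> a"
proof -
  have eq: "commutator G a b \<otimes> (b \<otimes> a) = a \<otimes> b"
    using a b by (simp add: m_assoc inv_mult_cancel)
  show ?thesis
  proof
    assume "commutator G a b = \<one>"
    thus "a \<otimes> b = b \<otimes> a" using eq a b by simp
  next
    assume "a \<otimes> b = b \<otimes> a"
    thus "commutator G a b = \<one>" using eq a b by simp
  qed
qed

lemma inv_commutator:
  "a \<in> carrier G \<Longrightarrow> b \<in> carrier G \<Longrightarrow> inv (commutator G a b) = commutator G b a"
  by (simp add: inv_mult_group m_assoc)

lemma inv_commute:
  assumes a: "a \<in> carrier G" and b: "b \<in> carrier G" and ab: "a \<otimes> b = b \<otimes> a"
  shows "inv a \<otimes> b = b \<otimes> inv a"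
proof -
  have "inv a \<otimes> b = inv a \<otimes> (b \<otimes> a) \<otimes> inv a" using a b by (simp add: m_assoc)
  also have "\<dots> = b \<otimes> inv a" using a b by (simp add: ab[symmetric] m_assoc inv_mult_cancel)
  finally show ?thesis .
qed

lemma commute_nat_pow:
  assumes x: "x \<in> carrier G" and y: "y \<in> carrier G" and xy: "x \<otimes> y = y \<otimes> x"
  shows "x \<otimes> y [^] (n::nat) = y [^] n \<otimes> x"
proof (induction n)
  case 0 thus ?case using x by simp
next
  case (Suc n)
  have "x \<otimes> y [^] Suc n = (x \<otimes> y [^] n) \<otimes> y" using x y by (simp add: m_assoc)
  also have "\<dots> = y [^] n \<otimes> (x \<otimes> y)" using Suc x y by (simp add: m_assoc)
  also have "\<dots> = y [^] Suc n \<otimes> x" using xy x y by (simp add: m_assoc)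
  finally show ?case .
qed

lemma commutator_nat_pow:
  assumes a: "a \<in> carrier G" and b: "b \<in> carrier G"
    and ca: "commutator G a b \<otimes> a = a \<otimes> commutator G a b"
  shows "commutator G (a [^] (i::nat)) b = commutator G a b [^] i"
proof (induction i)
  case 0 thus ?case using b by simp
next
  case (Suc i)
  define c where "c = commutator G a b"
  have cc: "c \<in> carrier G" using a b c_def by simp
  have IH: "a [^] i \<otimes> b \<otimes> inv (a [^] i) = c [^] i \<otimes> b"
  proof -
    have "a [^] i \<otimes> b \<otimes> inv (a [^] i) = commutator G (a [^] i) b \<otimes> b"
      using a b by (simp add: m_assoc)
    thus ?thesis using Suc c_def by simp
  qed
  have ac: "a \<otimes> c [^] i = c [^] i \<otimes> a" using commute_nat_pow[OF a cc] ca c_def by simp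
  have "commutator G (a [^] Suc i) b = a \<otimes> (a [^] i \<otimes> b \<otimes> inv (a [^] i)) \<otimes> inv a \<otimes> inv b"
    unfolding nat_pow_Suc2[OF a] using a b by (simp add: inv_mult_group m_assoc)
  also have "\<dots> = (a \<otimes> c [^] i) \<otimes> b \<otimes> inv a \<otimes> inv b" using IH a b cc by (simp add: m_assoc)
  also have "\<dots> = c [^] i \<otimes> c" using ac a b cc by (simp add: c_def m_assoc)
  finally show ?case using cc c_def by simp
qed

text \<open>Since the commutator commutes with \<open>x\<close> and \<open>y\<close>, its \<open>m\<close>-th power is the commutator of
  \<open>x [^] m\<close> and \<open>y\<close>, and similarly for \<open>n\<close>; so its order divides both \<open>m\<close> and \<open>n\<close>.\<close>

lemma commute_if_commutator_central_coprime:
  assumes x: "x \<in> carrier G" and y: "y \<in> carrier G"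
    and cx: "commutator G x y \<otimes> x = x \<otimes> commutator G x y"
    and cy: "commutator G x y \<otimes> y = y \<otimes> commutator G x y"
    and xm: "x [^] (m::nat) = \<one>" and yn: "y [^] (n::nat) = \<one>" and cop: "coprime m n"
  shows "x \<otimes> y = y \<otimes> x"
proof -
  define z where "z = commutator G x y"
  have zc: "z \<in> carrier G" using x y z_def by simp
  have "z [^] m = \<one>" using commutator_nat_pow[OF x y cx, of m] xm y z_def by simp
  moreover have "inv z [^] n = \<one>"
  proof -
    have "commutator G y x \<otimes> y = y \<otimes> commutator G y x"
      using inv_commute[OF zc y] cy inv_commutator[OF x y] z_def by simp
    thus ?thesis using commutator_nat_pow[OF y x, of n] yn x inv_commutator[OF x y] z_def by simp
  qed
  hence "z [^] n = \<one>" using zc by (simp add: nat_pow_inv)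
  ultimately have "ord z dvd m" "ord z dvd n" using pow_eq_id[OF zc] by auto
  hence "ord z = 1" using cop by (metis coprime_common_divisor_nat)
  hence "z = \<one>" using ord_eq_1[OF zc] by simp
  thus ?thesis using commutator_eq_one_iff[OF x y] z_def by simp
qed

end

lemma (in normal) r_coset_eq_one_iff:
  assumes a: "a \<in> carrier G"
  shows "H #> a = \<one>\<^bsub>G Mod H\<^esub> \<longleftrightarrow> a \<in> H"
  using rcos_self[OF a subgroup_axioms] coset_join2[OF a subgroup_axioms] by auto

context group begin

lemma lower_central_normal: "lower_central G k \<lhd> G"
proof (induction k)
  case 0 thus ?case by (simp add: normal_self)
next
  case (Suc k)
  interpret N: normal "lower_central G k" G by (rule Suc)
  let ?S = "{commutator G a b | a b. a \<in> lower_central G k \<and> b \<in> carrier G}"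
  have "generate G ?S \<lhd> G"
  proof (rule normal_generateI)
    show "?S \<subseteq> carrier G" using N.subset by auto
    fix h g assume h: "h \<in> ?S" and g: "g \<in> carrier G"
    then obtain a b where ab: "h = commutator G a b" "a \<in> lower_central G k" "b \<in> carrier G" by blast
    have ac: "a \<in> carrier G" using ab N.subset by blast
    have "g \<otimes> h \<otimes> inv g = commutator G (g \<otimes> a \<otimes> inv g) (g \<otimes> b \<otimes> inv g)"
      using g ac ab by (simp add: inv_mult_group m_assoc inv_mult_cancel)
    moreover have "g \<otimes> a \<otimes> inv g \<in> lower_central G k" using N.inv_op_closed2[OF g ab(2)] .
    ultimately show "g \<otimes> h \<otimes> inv g \<in> ?S" using g ab by blast
  qed
  thus ?case by (simp add: commutator_subgroup_def)
qed

lemma lower_central_commutator: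
  "a \<in> lower_central G k \<Longrightarrow> b \<in> carrier G \<Longrightarrow> commutator G a b \<in> lower_central G (Suc k)"
  by (auto simp: commutator_subgroup_def intro!: generate.incl)

lemma lower_central_Suc_subset: "lower_central G (Suc k) \<subseteq> lower_central G k"
proof -
  interpret N: normal "lower_central G k" G by (rule lower_central_normal)
  have comm: "commutator G a b \<in> lower_central G k"
    if "a \<in> lower_central G k" "b \<in> carrier G" for a b
  proof -
    have "b \<otimes> inv a \<otimes> inv b \<in> lower_central G k"
      using N.inv_op_closed2[OF that(2)] that(1) N.m_inv_closed by blast
    hence "a \<otimes> (b \<otimes> inv a \<otimes> inv b) \<in> lower_central G k" using that(1) N.m_closed by blast
    thus ?thesis using that N.subset by (simp add: m_assoc subsetD)
  qed
  show ?thesis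
    unfolding lower_central.simps commutator_subgroup_def
    by (rule generate_subgroup_incl[OF _ N.subgroup_axioms]) (use comm in blast)
qed

text \<open>Modulo \<open>\<gamma>\<^sub>k\<^sub>+\<^sub>2\<close>, a commutator lying in \<open>\<gamma>\<^sub>k\<^sub>+\<^sub>1\<close> is central, so it is trivial there by
  \<open>commute_if_commutator_central_coprime\<close>.\<close>

lemma coprime_commutator_lower_central_Suc:
  assumes x: "x \<in> carrier G" and y: "y \<in> carrier G" and cop: "coprime (ord x) (ord y)"
    and z: "commutator G x y \<in> lower_central G (Suc k)"
  shows "commutator G x y \<in> lower_central G (Suc (Suc k))"
proof -
  define z where "z = commutator G x y"
  have zc: "z \<in> carrier G" using x y z_def by simp
  define L where "L = lower_central G (Suc (Suc k))"
  define Q where "Q = G Mod L"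
  interpret N: normal L G unfolding L_def by (rule lower_central_normal)
  interpret Q: group Q unfolding Q_def by (rule N.factorgroup_is_group)
  interpret h: group_hom G Q "\<lambda>a. L #> a"
    using N.r_coset_hom_Mod Q_def by unfold_locales simp
  have ker: "L #> a = \<one>\<^bsub>Q\<^esub> \<longleftrightarrow> a \<in> L" if "a \<in> carrier G" for a
    using N.r_coset_eq_one_iff[OF that] unfolding Q_def .
  have central: "(L #> z) \<otimes>\<^bsub>Q\<^esub> (L #> w) = (L #> w) \<otimes>\<^bsub>Q\<^esub> (L #> z)"
    if w: "w \<in> carrier G" for w
  proof -
    have "commutator G z w \<in> L"
      unfolding L_def z_def by (rule lower_central_commutator[OF z w])
    moreover have "commutator G z w \<in> carrier G" using zc w by simp
    ultimately have "L #> commutator G z w = \<one>\<^bsub>Q\<^esub>" using ker by blast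
    hence "commutator Q (L #> z) (L #> w) = \<one>\<^bsub>Q\<^esub>"
      using zc w by (simp add: h.hom_mult h.hom_inv)
    thus ?thesis using Q.commutator_eq_one_iff zc w by simp
  qed
  have "(L #> x) \<otimes>\<^bsub>Q\<^esub> (L #> y) = (L #> y) \<otimes>\<^bsub>Q\<^esub> (L #> x)"
  proof (rule Q.commute_if_commutator_central_coprime[OF _ _ _ _ _ _ cop])
    show "(L #> x) [^]\<^bsub>Q\<^esub> ord x = \<one>\<^bsub>Q\<^esub>"
      using h.hom_nat_pow[OF x, of "ord x"] x by simp
    show "(L #> y) [^]\<^bsub>Q\<^esub> ord y = \<one>\<^bsub>Q\<^esub>"
      using h.hom_nat_pow[OF y, of "ord y"] y by simp
  qed (use x y central[OF x] central[OF y] zc z_def in simp_all)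
  moreover have "L #> x \<in> carrier Q" "L #> y \<in> carrier Q" using x y by simp_all
  ultimately have "commutator Q (L #> x) (L #> y) = \<one>\<^bsub>Q\<^esub>"
    using Q.commutator_eq_one_iff by blast
  hence "L #> z = \<one>\<^bsub>Q\<^esub>" using x y z_def by simp
  thus ?thesis using ker zc L_def z_def by simp
qed

lemma nilpotent_coprime_orders_commute:
  assumes nil: "nilpotent_group G"
    and x: "x \<in> carrier G" and y: "y \<in> carrier G" and cop: "coprime (ord x) (ord y)"
  shows "x \<otimes> y = y \<otimes> x"
proof -
  have "commutator G x y \<in> lower_central G (Suc k)" for k
  proof (induction k)
    case 0 show ?case using lower_central_commutator[of x 0 y] x y by simp
  next
    case (Suc k) thus ?case by (rule coprime_commutator_lower_central_Suc[OF x y cop])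
  qed
  moreover obtain n where "lower_central G n = {\<one>}"
    using nil unfolding nilpotent_group_def by blast
  ultimately have "commutator G x y = \<one>" using lower_central_Suc_subset[of n] by blast
  thus ?thesis using commutator_eq_one_iff[OF x y] by simp
qed

lemma card_subgroup_dvd:
  assumes "subgroup I G" "subgroup J G" "I \<subseteq> J"
  shows "card I dvd card J"
proof -
  interpret J: group "G\<lparr>carrier := J\<rparr>" using subgroup.subgroup_is_group[OF assms(2) is_group] .
  have "card (rcosets\<^bsub>G\<lparr>carrier := J\<rparr>\<^esub> I) * card I = card J"
    using J.lagrange[OF subgroup_incl[OF assms]] by (simp add: order_def)
  thus ?thesis by (metis dvd_triv_right)
qed

lemma ord_dvd_card_subgroup:
  assumes P: "subgroup P G" and x: "x \<in> P"
  shows "ord x dvd card P"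
proof -
  have xc: "x \<in> carrier G" using subgroup.mem_carrier[OF P x] .
  have "generate G {x} \<subseteq> P" using P x by (intro generate_subgroup_incl) auto
  hence "card (generate G {x}) dvd card P"
    using card_subgroup_dvd[OF generate_is_subgroup P] xc by auto
  thus ?thesis using generate_pow_card[OF xc] by simp
qed

lemma ord_prime_power:
  assumes p: "Factorial_Ring.prime p" and P: "subgroup P G" and cP: "card P = p ^ a" and x: "x \<in> P"
  obtains j where "ord x = p ^ j"
  using ord_dvd_card_subgroup[OF P x] cP divides_primepow_nat[OF p] by auto

lemma subgroupI_finite:
  assumes fin: "finite (carrier G)" and S: "S \<subseteq> carrier G" "\<one> \<in> S"
    and mult: "\<And>a b. a \<in> S \<Longrightarrow> b \<in> S \<Longrightarrow> a \<otimes> b \<in> S"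
  shows "subgroup S G"
proof (rule subgroupI)
  show "S \<subseteq> carrier G" "S \<noteq> {}" using S by auto
next
  fix a b assume "a \<in> S" "b \<in> S" thus "a \<otimes> b \<in> S" by (rule mult)
next
  fix a assume a: "a \<in> S"
  have ac: "a \<in> carrier G" using a S by blast
  have pow: "a [^] (n::nat) \<in> S" for n
    by (induction n) (use S a mult in auto)
  have "a [^] (ord a - 1) \<otimes> a = a [^] ord a"
    using ac ord_ge_1[OF fin ac] by (simp add: nat_pow_Suc[symmetric] del: nat_pow_Suc)
  hence "inv a = a [^] (ord a - 1)" using ac by (intro inv_equality) auto
  thus "inv a \<in> S" using pow by simp
qed

lemma conj_nat_pow:
  assumes g: "g \<in> carrier G" and h: "h \<in> carrier G"
  shows "(g \<otimes> h \<otimes> inv g) [^] (n::nat) = g \<otimes> h [^] n \<otimes> inv g"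
proof (induction n)
  case 0 thus ?case using g by simp
next
  case (Suc n)
  have "(g \<otimes> h \<otimes> inv g) [^] Suc n = (g \<otimes> h [^] n \<otimes> inv g) \<otimes> (g \<otimes> h \<otimes> inv g)"
    using Suc by simp
  also have "\<dots> = g \<otimes> h [^] Suc n \<otimes> inv g" using g h by (simp add: m_assoc inv_mult_cancel)
  finally show ?case .
qed

lemma nat_pow_bezout:
  fixes a b :: nat
  assumes x: "x \<in> carrier G" and cop: "coprime a b" and a: "a \<noteq> 0"
  obtains s t :: nat where "x = inv ((x [^] b) [^] t) \<otimes> (x [^] a) [^] s"
proof -
  obtain s t where "a * s = b * t + gcd a b" using bezout_nat[OF a] by blast
  hence "a * s = b * t + 1" using cop by simp
  hence "(x [^] a) [^] s = (x [^] b) [^] t \<otimes> x"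
    using x by (simp add: nat_pow_pow nat_pow_mult[symmetric])
  hence "x = inv ((x [^] b) [^] t) \<otimes> (x [^] a) [^] s" using x by (simp add: inv_mult_cancel)
  thus thesis by (rule that)
qed

lemma ex_sylow:
  assumes fin: "finite (carrier G)" and p: "Factorial_Ring.prime p"
  obtains P where "subgroup P G" "card P = p ^ multiplicity p (order G)"
proof -
  have "order G = p ^ multiplicity p (order G) * (order G div p ^ multiplicity p (order G))"
    using multiplicity_dvd[of p "order G"] by simp
  thus thesis using sylow_thm[OF p is_group _ fin] that by blast
qed

text \<open>A subgroup containing a Sylow subgroup for every prime has order divisible by every prime
  power dividing the group order.\<close>

lemma subgroup_eq_carrier_if_contains_sylows:
  assumes fin: "finite (carrier G)" and N: "subgroup N G"
    and sylow: "\<And>q. Factorial_Ring.prime q \<Longrightarrow> \<exists>Q. subgroup Q G \<and> card Q = q ^ multiplicity q (order G) \<and> Q \<subseteq> N"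
  shows "N = carrier G"
proof -
  have N0: "card N \<noteq> 0" using subgroup.finite_imp_card_positive[OF N] fin by simp
  have "multiplicity q (order G) \<le> multiplicity q (card N)" if q: "Factorial_Ring.prime q" for q
  proof -
    obtain Q where Q: "subgroup Q G" "card Q = q ^ multiplicity q (order G)" "Q \<subseteq> N"
      using sylow[OF q] by blast
    have "card Q dvd card N" using card_subgroup_dvd[OF Q(1) N Q(3)] .
    thus ?thesis using Q(2) multiplicity_geI[OF N0] q not_prime_unit by metis
  qed
  hence "order G dvd card N"
    using multiplicity_le_imp_dvd fin order_gt_0_iff_finite by (metis not_gr0)
  moreover have "N \<subseteq> carrier G" using N by (rule subgroup.subset)
  ultimately have "card N = card (carrier G)"
    using N0 by (metis antisym card_mono dvd_imp_le fin order_def not_gr0)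
  thus ?thesis using card_subset_eq[OF fin] \<open>N \<subseteq> carrier G\<close> by blast
qed

lemma subgroup_elementwise_normalizer:
  assumes fin: "finite (carrier G)" and P: "P \<subseteq> carrier G"
  shows "subgroup {g \<in> carrier G. \<forall>h\<in>P. g \<otimes> h \<otimes> inv g \<in> P} G" (is "subgroup ?N G")
proof (rule subgroupI_finite[OF fin])
  show "?N \<subseteq> carrier G" "\<one> \<in> ?N" using P by auto
  fix a b assume a: "a \<in> ?N" and b: "b \<in> ?N"
  have ab: "a \<in> carrier G" "b \<in> carrier G" using a b by auto
  have "a \<otimes> b \<otimes> h \<otimes> inv (a \<otimes> b) = a \<otimes> (b \<otimes> h \<otimes> inv b) \<otimes> inv a" if "h \<in> P" for h
    using ab that P by (auto simp: m_assoc inv_mult_group)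
  thus "a \<otimes> b \<in> ?N" using a b ab by auto
qed

text \<open>The normalizer of a Sylow \<open>p\<close>-subgroup contains every element of order prime to \<open>p\<close>
  (these commute with the \<open>p\<close>-subgroup) and the subgroup itself, hence every Sylow subgroup.\<close>

lemma sylow_normal_if_coprime_orders_commute:
  assumes fin: "finite (carrier G)"
    and comm: "\<And>x y. x \<in> carrier G \<Longrightarrow> y \<in> carrier G \<Longrightarrow> coprime (ord x) (ord y) \<Longrightarrow> x \<otimes> y = y \<otimes> x"
    and p: "Factorial_Ring.prime p" and P: "subgroup P G" and cP: "card P = p ^ multiplicity p (order G)"
  shows "P \<lhd> G"
proof -
  define N where "N = {g \<in> carrier G. \<forall>h\<in>P. g \<otimes> h \<otimes> inv g \<in> P}"
  have Psub: "P \<subseteq> carrier G" using subgroup.subset[OF P] .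
  have sN: "subgroup N G" unfolding N_def by (rule subgroup_elementwise_normalizer[OF fin Psub])
  have prime_to_p: "y \<in> N" if y: "y \<in> carrier G" "\<not> p dvd ord y" for y
  proof -
    have "y \<otimes> h \<otimes> inv y = h" if h: "h \<in> P" for h
    proof -
      have hc: "h \<in> carrier G" using h Psub by blast
      obtain j where "ord h = p ^ j" using ord_prime_power[OF p P cP h] .
      hence "coprime (ord y) (ord h)" using prime_imp_coprime[OF p y(2)] by (simp add: coprime_commute)
      hence "y \<otimes> h = h \<otimes> y" using comm y hc by blast
      thus ?thesis using hc y by (simp add: m_assoc)
    qed
    thus ?thesis unfolding N_def using y by auto
  qed
  have "N = carrier G"
  proof (rule subgroup_eq_carrier_if_contains_sylows[OF fin sN])
    fix q :: nat assume q: "Factorial_Ring.prime q"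
    obtain Q where Q: "subgroup Q G" "card Q = q ^ multiplicity q (order G)"
      using ex_sylow[OF fin q] .
    show "\<exists>Q. subgroup Q G \<and> card Q = q ^ multiplicity q (order G) \<and> Q \<subseteq> N"
    proof (cases "q = p")
      case True
      have "P \<subseteq> N" unfolding N_def using P Psub
        by (auto intro: subgroup.m_closed subgroup.m_inv_closed)
      thus ?thesis using P cP True by blast
    next
      case False
      have "Q \<subseteq> N"
      proof
        fix x assume x: "x \<in> Q"
        obtain j where j: "ord x = q ^ j" using ord_prime_power[OF q Q x] .
        have "\<not> p dvd ord x"
          using j prime_dvd_power[OF p] primes_dvd_imp_eq[OF p q] False by auto
        thus "x \<in> N" using prime_to_p subgroup.mem_carrier[OF Q(1) x] by blast
      qed
      thus ?thesis using Q by blast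
    qed
  qed
  thus ?thesis using normal_invI[OF P] unfolding N_def by blast
qed

text \<open>The coset of a \<open>p\<close>-element in \<open>G Mod P\<close> has order dividing both a power of \<open>p\<close> and the
  index of \<open>P\<close>, which is prime to \<open>p\<close>.\<close>

lemma p_elements_subset_normal_sylow:
  assumes fin: "finite (carrier G)" and p: "Factorial_Ring.prime p"
    and P: "P \<lhd> G" and cP: "card P = p ^ multiplicity p (order G)"
  shows "p_elements G p \<subseteq> P"
proof
  fix g assume "g \<in> p_elements G p"
  then obtain k where g: "g \<in> carrier G" and gk: "g [^] (p ^ k) = \<one>" unfolding p_elements_def by auto
  interpret N: normal P G by (rule P)
  interpret Q: group "G Mod P" by (rule N.factorgroup_is_group)
  define m where "m = order G div p ^ multiplicity p (order G)"
  have oG: "order G \<noteq> 0" using fin order_gt_0_iff_finite by (metis not_gr0)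
  have "\<not> is_unit p" using p not_prime_unit by blast
  hence ndvd: "\<not> p dvd m" using oG multiplicity_decompose[of "order G" p] m_def by simp
  have "card (rcosets P) * card P = order G" using lagrange[OF N.subgroup_axioms] .
  hence "order (G Mod P) = m"
    using cP m_def p by (simp add: order_def FactGroup_def)
      (metis nonzero_mult_div_cancel_right power_not_zero prime_gt_0_nat not_gr0)
  hence "(P #> g) [^]\<^bsub>G Mod P\<^esub> m = \<one>\<^bsub>G Mod P\<^esub>"
    using Q.pow_order_eq_1[of "P #> g"] g by (simp add: FactGroup_def RCOSETS_def) blast
  hence gm: "g [^] m \<in> P" using N.FactGroup_pow[OF g, of m] N.r_coset_eq_one_iff g by simp
  have cop: "coprime m (p ^ k)" using prime_imp_coprime[OF p ndvd] by (simp add: coprime_commute)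
  have m0: "m \<noteq> 0" using ndvd by (metis dvd_0_right)
  obtain s t :: nat where "g = inv ((g [^] (p ^ k)) [^] t) \<otimes> (g [^] m) [^] s"
    by (rule nat_pow_bezout[OF g cop m0])
  hence "g = (g [^] m) [^] s" using gk g by simp
  moreover have "(g [^] m) [^] s \<in> P" using subgroup_nat_pow_closed[OF N.subgroup_axioms gm] .
  ultimately show "g \<in> P" by simp
qed

end

theorem card_p_elements_le_if_nilpotent:
  assumes G: "group G" and fin: "finite (carrier G)" and nil: "nilpotent_group G"
    and p: "Factorial_Ring.prime p"
  shows "card (p_elements G p) \<le> p ^ multiplicity p (order G)"
proof -
  interpret group G by fact
  obtain P where P: "subgroup P G" "card P = p ^ multiplicity p (order G)"
    using ex_sylow[OF fin p] .
  have "P \<lhd> G"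
    using sylow_normal_if_coprime_orders_commute[OF fin _ p P] nilpotent_coprime_orders_commute[OF nil]
    by blast
  hence "p_elements G p \<subseteq> P" using p_elements_subset_normal_sylow[OF fin p _ P(2)] by blast
  moreover have "finite P" using fin subgroup.subset[OF P(1)] by (rule finite_subset[rotated])
  ultimately show ?thesis using P(2) card_mono by metis
qed

section \<open>Groups with few \<open>p\<close>-elements are nilpotent\<close>

fun upper_central :: "('a, 'b) monoid_scheme \<Rightarrow> nat \<Rightarrow> 'a set" where
  "upper_central G 0 = {\<one>\<^bsub>G\<^esub>}"
| "upper_central G (Suc i) = {x \<in> carrier G. \<forall>g\<in>carrier G. commutator G x g \<in> upper_central G i}"

lemma (in group_action) orbit_card_p_group:
  assumes p: "Factorial_Ring.prime p" and order: "order G = p ^ a" and B: "B \<in> orbits G E \<phi>"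
  shows "card B = 1 \<or> p dvd card B"
proof -
  obtain x where x: "x \<in> E" "B = orbit G \<phi> x" using B unfolding orbits_def by blast
  have "card B * card (stabilizer G \<phi> x) = p ^ a"
    using orbit_stabilizer_theorem[OF x(1)] x order by simp
  hence "card B dvd p ^ a" by (metis dvd_triv_left)
  then obtain i where "card B = p ^ i" using divides_primepow_nat[OF p] by blast
  thus ?thesis by (cases i) auto
qed

context group begin

lemma commutator_preimage_normal:
  assumes fin: "finite (carrier G)" and N: "N \<lhd> G"
  shows "{x \<in> carrier G. \<forall>g\<in>carrier G. commutator G x g \<in> N} \<lhd> G" (is "?Z \<lhd> G")
proof -
  interpret N: normal N G by (rule N)
  have "subgroup ?Z G"
  proof (rule subgroupI_finite[OF fin])
    show "?Z \<subseteq> carrier G" "\<one> \<in> ?Z" using N.one_closed by auto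
    fix x y assume x: "x \<in> ?Z" and y: "y \<in> ?Z"
    have xy: "x \<in> carrier G" "y \<in> carrier G" using x y by auto
    have "commutator G (x \<otimes> y) g \<in> N" if g: "g \<in> carrier G" for g
    proof -
      have "commutator G (x \<otimes> y) g = x \<otimes> commutator G y g \<otimes> inv x \<otimes> commutator G x g"
        using xy g by (simp add: m_assoc inv_mult_group inv_mult_cancel)
      moreover have "x \<otimes> commutator G y g \<otimes> inv x \<in> N"
        using N.inv_op_closed2[OF xy(1)] y g by blast
      moreover have "commutator G x g \<in> N" using x g by blast
      ultimately show ?thesis using N.m_closed by simp
    qed
    thus "x \<otimes> y \<in> ?Z" using xy by simp
  qed
  moreover have "k \<otimes> h \<otimes> inv k \<in> ?Z" if k: "k \<in> carrier G" and h: "h \<in> ?Z" for k h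
  proof -
    have hc: "h \<in> carrier G" using h by simp
    have "commutator G (k \<otimes> h \<otimes> inv k) g \<in> N" if g: "g \<in> carrier G" for g
    proof -
      have "commutator G (k \<otimes> h \<otimes> inv k) g = k \<otimes> commutator G h (inv k \<otimes> g \<otimes> k) \<otimes> inv k"
        using k hc g by (simp add: m_assoc inv_mult_group inv_mult_cancel mult_inv_cancel)
      moreover have "inv k \<otimes> g \<otimes> k \<in> carrier G" using k g by simp
      hence "commutator G h (inv k \<otimes> g \<otimes> k) \<in> N" using h by blast
      ultimately show ?thesis using N.inv_op_closed2[OF k] by simp
    qed
    thus ?thesis using k hc by simp
  qed
  ultimately show ?thesis by (rule normal_invI)
qed

lemma upper_central_normal: "finite (carrier G) \<Longrightarrow> upper_central G i \<lhd> G"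
  by (induction i) (simp_all add: one_is_normal commutator_preimage_normal)

lemma upper_central_subset: "upper_central G i \<subseteq> carrier G"
  by (cases i) auto

lemma upper_central_Suc_mono: "upper_central G i \<subseteq> upper_central G (Suc i)"
proof (induction i)
  case 0 thus ?case by (auto simp: commutator_eq_one_iff)
next
  case (Suc i) thus ?case by auto
qed

lemma upper_central_mono: "i \<le> j \<Longrightarrow> upper_central G i \<subseteq> upper_central G j"
  using lift_Suc_mono_le[of "upper_central G"] upper_central_Suc_mono by blast

lemma lower_central_subset_upper_central:
  assumes fin: "finite (carrier G)" and top: "upper_central G c = carrier G"
  shows "k \<le> c \<Longrightarrow> lower_central G k \<subseteq> upper_central G (c - k)"
proof (induction k)
  case 0 thus ?case using top by simp
next
  case (Suc k)
  interpret N: normal "upper_central G (c - Suc k)" G by (rule upper_central_normal[OF fin])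
  have "c - k = Suc (c - Suc k)" using Suc by simp
  hence "commutator G a b \<in> upper_central G (c - Suc k)"
    if "a \<in> lower_central G k" "b \<in> carrier G" for a b
    using Suc that by auto
  thus ?case
    unfolding lower_central.simps commutator_subgroup_def
    by (intro generate_subgroup_incl[OF _ N.subgroup_axioms]) blast
qed

lemma nilpotent_if_upper_central_eq_carrier:
  assumes fin: "finite (carrier G)" and top: "upper_central G c = carrier G"
  shows "nilpotent_group G"
proof -
  have "lower_central G c \<subseteq> {\<one>}"
    using lower_central_subset_upper_central[OF fin top, of c] by simp
  moreover have "\<one> \<in> lower_central G c"
    using lower_central_normal[of c] normal_imp_subgroup subgroup.one_closed by blast
  ultimately have "lower_central G c = {\<one>}" by blast
  thus ?thesis unfolding nilpotent_group_def using is_group by blast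
qed

text \<open>The class equation for the action by conjugation: all orbits have \<open>p\<close>-power size, and the
  only one-point orbits are those of central elements.\<close>

lemma p_group_center_nontrivial:
  assumes fin: "finite (carrier G)" and p: "Factorial_Ring.prime p"
    and order: "order G = p ^ a" and a: "0 < a"
  shows "\<exists>x\<in>carrier G. x \<noteq> \<one> \<and> (\<forall>g\<in>carrier G. g \<otimes> x = x \<otimes> g)"
proof (rule ccontr)
  assume no_center: "\<not> ?thesis"
  define \<phi> where "\<phi> = (\<lambda>g. \<lambda>h\<in>carrier G. g \<otimes> h \<otimes> inv g)"
  interpret A: group_action G "carrier G" \<phi> unfolding \<phi>_def by (rule action_by_conjugation)
  define \<O> where "\<O> = orbits G (carrier G) \<phi>"
  have size: "card B = 1 \<or> p dvd card B" if "B \<in> \<O>" for B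
    using A.orbit_card_p_group[OF p order] that unfolding \<O>_def .
  have one_point: "B = {\<one>}" if B: "B \<in> \<O>" and "card B = 1" for B
  proof -
    obtain x where x: "x \<in> carrier G" "B = orbit G \<phi> x" using B unfolding \<O>_def orbits_def by blast
    obtain y where "B = {y}" using \<open>card B = 1\<close> card_1_singletonE by blast
    hence Bx: "B = {x}" using A.orbit_refl[OF x(1)] x(2) by simp
    have central: "\<forall>g\<in>carrier G. g \<otimes> x = x \<otimes> g"
    proof
      fix g assume g: "g \<in> carrier G"
      have "\<phi> g x \<in> B" using g x unfolding orbit_def by blast
      hence "g \<otimes> x \<otimes> inv g = x" using Bx g x unfolding \<phi>_def by simp
      thus "g \<otimes> x = x \<otimes> g" using g x by (simp add: inv_solve_right')
    qed
    have "x = \<one>" using no_center x(1) central by blast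
    thus ?thesis using Bx by simp
  qed
  have "orbit G \<phi> \<one> = {\<one>}"
    using A.orbit_refl[OF one_closed] unfolding orbit_def \<phi>_def by auto
  hence one\<O>: "{\<one>} \<in> \<O>" unfolding \<O>_def orbits_def by (intro CollectI exI[of _ \<one>]) simp
  have "\<O> \<subseteq> Pow (carrier G)" using A.orbits_coverture unfolding \<O>_def by blast
  hence fin\<O>: "finite \<O>" using fin finite_subset by blast
  have "(\<Sum>B\<in>\<O>. card B) = (\<Sum>B\<in>\<O>. \<Sum>x\<in>B. (1::nat))" by simp
  also have "\<dots> = (\<Sum>x\<in>carrier G. (1::nat))" unfolding \<O>_def by (rule A.disjoint_sum[OF fin])
  also have "\<dots> = p ^ a" using order by (simp add: order_def)
  finally have "p ^ a = (\<Sum>B\<in>\<O> - {{\<one>}}. card B) + 1"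
    using sum.remove[OF fin\<O> one\<O>, of card] by simp
  moreover have "p dvd (\<Sum>B\<in>\<O> - {{\<one>}}. card B)"
  proof (rule dvd_sum)
    fix B assume "B \<in> \<O> - {{\<one>}}"
    thus "p dvd card B" using size one_point by blast
  qed
  moreover have "p dvd p ^ a" using a by simp
  ultimately have "p dvd 1" by (metis dvd_add_right_iff)
  thus False using p by simp
qed

lemma p_group_ex_central_mod_normal:
  assumes fin: "finite (carrier G)" and p: "Factorial_Ring.prime p" and order: "order G = p ^ a"
    and Z: "Z \<lhd> G" and Z_proper: "Z \<noteq> carrier G"
  obtains x where "x \<in> carrier G" "x \<notin> Z" "\<And>g. g \<in> carrier G \<Longrightarrow> commutator G x g \<in> Z"
proof -
  interpret N: normal Z G by (rule Z)
  define Q where "Q = G Mod Z"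
  interpret Q: group Q unfolding Q_def by (rule N.factorgroup_is_group)
  interpret h: group_hom G Q "\<lambda>a. Z #> a"
    using N.r_coset_hom_Mod Q_def by unfold_locales simp
  have ker: "Z #> a = \<one>\<^bsub>Q\<^esub> \<longleftrightarrow> a \<in> Z" if "a \<in> carrier G" for a
    using N.r_coset_eq_one_iff[OF that] unfolding Q_def .
  have cQ: "carrier Q = (\<lambda>a. Z #> a) ` carrier G" unfolding Q_def carrier_FactGroup ..
  have lag: "card (carrier Q) * card Z = p ^ a"
    using lagrange[OF N.subgroup_axioms] order unfolding Q_def by (simp add: FactGroup_def)
  hence "card Z dvd p ^ a" by (metis dvd_triv_right)
  then obtain j where j: "j \<le> a" "card Z = p ^ j"
    using divides_primepow_nat[OF p] by blast
  have "Z \<subset> carrier G" using N.subset Z_proper by blast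
  hence "card Z < p ^ a" using psubset_card_mono[OF fin] order unfolding order_def by simp
  hence "j < a" using j power_strict_increasing_iff[OF prime_gt_1_nat[OF p]] by simp
  have "card (carrier Q) * p ^ j = p ^ (a - j) * p ^ j"
    using lag j by (simp add: power_add[symmetric])
  hence "order Q = p ^ (a - j)" using p unfolding order_def by (simp add: prime_gt_0_nat)
  moreover have "finite (carrier Q)" using fin cQ by simp
  ultimately obtain zx where zx: "zx \<in> carrier Q" "zx \<noteq> \<one>\<^bsub>Q\<^esub>"
    and central: "\<forall>w\<in>carrier Q. w \<otimes>\<^bsub>Q\<^esub> zx = zx \<otimes>\<^bsub>Q\<^esub> w"
    using Q.p_group_center_nontrivial[OF _ p] \<open>j < a\<close> by (metis zero_less_diff)
  obtain x where x: "x \<in> carrier G" "zx = Z #> x" using zx(1) cQ by blast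
  have "commutator G x g \<in> Z" if g: "g \<in> carrier G" for g
  proof -
    have "commutator Q zx (Z #> g) = \<one>\<^bsub>Q\<^esub>"
      using Q.commutator_eq_one_iff zx(1) central g by simp
    moreover have "Z #> commutator G x g = commutator Q zx (Z #> g)"
      using x g by (simp add: h.hom_mult h.hom_inv)
    ultimately have "Z #> commutator G x g = \<one>\<^bsub>Q\<^esub>" by simp
    moreover have "commutator G x g \<in> carrier G" using x g by simp
    ultimately show ?thesis using ker by blast
  qed
  moreover have "x \<notin> Z" using ker x zx(2) by simp
  ultimately show thesis using that x(1) by blast
qed

lemma p_group_upper_central_eq_carrier:
  assumes fin: "finite (carrier G)" and p: "Factorial_Ring.prime p" and order: "order G = p ^ a"
  shows "upper_central G (order G) = carrier G"
proof -
  have "upper_central G i = carrier G \<or> i < card (upper_central G i)" for i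
  proof (induction i)
    case 0 thus ?case by simp
  next
    case (Suc i)
    show ?case
    proof (cases "upper_central G i = carrier G")
      case True
      thus ?thesis using upper_central_Suc_mono[of i] upper_central_subset[of "Suc i"] by blast
    next
      case False
      obtain x where "x \<in> carrier G" "x \<notin> upper_central G i"
        "\<And>g. g \<in> carrier G \<Longrightarrow> commutator G x g \<in> upper_central G i"
        using p_group_ex_central_mod_normal[OF fin p order upper_central_normal[OF fin] False] by blast
      hence "upper_central G i \<subset> upper_central G (Suc i)"
        using upper_central_Suc_mono[of i] by auto
      moreover have "finite (upper_central G (Suc i))"
        using fin upper_central_subset finite_subset by blast
      ultimately have "card (upper_central G i) < card (upper_central G (Suc i))"
        by (rule psubset_card_mono[rotated])
      thus ?thesis using Suc False by simp
    qed
  qed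
  moreover have "card (upper_central G (order G)) \<le> order G"
    unfolding order_def using card_mono[OF fin upper_central_subset] .
  ultimately show ?thesis by fastforce
qed

lemma p_elements_sylow:
  assumes fin: "finite (carrier G)" and p: "Factorial_Ring.prime p"
    and bound: "card (p_elements G p) \<le> p ^ multiplicity p (order G)"
  shows "p_elements G p \<lhd> G" "card (p_elements G p) = p ^ multiplicity p (order G)"
proof -
  obtain P where P: "subgroup P G" "card P = p ^ multiplicity p (order G)"
    using ex_sylow[OF fin p] .
  have PS: "P \<subseteq> p_elements G p"
  proof
    fix x assume x: "x \<in> P"
    have xc: "x \<in> carrier G" using subgroup.mem_carrier[OF P(1) x] .
    obtain j where "ord x = p ^ j" using ord_prime_power[OF p P x] .
    hence "x [^] (p ^ j) = \<one>" using pow_ord_eq_1[OF xc] by simp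
    thus "x \<in> p_elements G p" unfolding p_elements_def using xc by blast
  qed
  have "finite (p_elements G p)"
    using fin p_elements_subset[of G p] finite_subset by blast
  hence "P = p_elements G p"
    using card_seteq[OF _ PS] bound P(2) by simp
  thus "card (p_elements G p) = p ^ multiplicity p (order G)" using P(2) by simp
  show "p_elements G p \<lhd> G"
  proof (rule normal_invI)
    show "subgroup (p_elements G p) G" using P(1) \<open>P = p_elements G p\<close> by simp
    fix x h assume x: "x \<in> carrier G" and "h \<in> p_elements G p"
    then obtain k where h: "h \<in> carrier G" "h [^] (p ^ k) = \<one>" unfolding p_elements_def by auto
    have "(x \<otimes> h \<otimes> inv x) [^] (p ^ k) = \<one>"
      using conj_nat_pow[OF x h(1)] h(2) x by simp
    thus "x \<otimes> h \<otimes> inv x \<in> p_elements G p" unfolding p_elements_def using x h by auto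
  qed
qed

text \<open>Induction on the order of \<open>g\<close>: split off its \<open>p\<close>-part for some prime \<open>p\<close> dividing it.\<close>

lemma generate_p_elements:
  assumes fin: "finite (carrier G)"
  shows "g \<in> carrier G \<Longrightarrow> g \<in> generate G (\<Union>p\<in>{p. Factorial_Ring.prime p}. p_elements G p)"
proof (induction "ord g" arbitrary: g rule: less_induct)
  case less
  let ?S = "\<Union>p\<in>{p. Factorial_Ring.prime p}. p_elements G p"
  have sg: "subgroup (generate G ?S) G"
    using generate_is_subgroup[of ?S] p_elements_subset[of G] by blast
  have g: "g \<in> carrier G" by fact
  show ?case
  proof (cases "ord g = 1")
    case True
    thus ?thesis using ord_eq_1[OF g] by (simp add: generate.one)
  next
    case False
    then obtain p where p: "Factorial_Ring.prime p" "p dvd ord g" using prime_factor_nat by blast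
    define a where "a = multiplicity p (ord g)"
    define m where "m = ord g div p ^ a"
    have n0: "ord g \<noteq> 0" using ord_ge_1[OF fin g] by simp
    have "\<not> is_unit p" using p not_prime_unit by blast
    hence ndvd: "\<not> p dvd m" using multiplicity_decompose[of "ord g" p] n0 m_def a_def by simp
    have nm: "ord g = p ^ a * m" using multiplicity_dvd[of p "ord g"] m_def a_def by simp
    hence m0: "m \<noteq> 0" using n0 by auto
    have a0: "a \<noteq> 0"
    proof
      assume "a = 0"
      hence "ord g = m" using nm by simp
      thus False using p ndvd by simp
    qed
    have cop: "coprime m (p ^ a)" using prime_imp_coprime[OF p(1) ndvd] by (simp add: coprime_commute)
    obtain s t :: nat where st: "g = inv ((g [^] (p ^ a)) [^] t) \<otimes> (g [^] m) [^] s"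
      by (rule nat_pow_bezout[OF g cop m0])
    have "((g [^] m) [^] s) [^] (p ^ a) = (g [^] ord g) [^] s"
      using g nm by (simp add: nat_pow_pow mult.commute mult.left_commute mult.assoc)
    hence "(g [^] m) [^] s \<in> p_elements G p" unfolding p_elements_def using g by auto
    hence "(g [^] m) [^] s \<in> ?S" using p(1) by blast
    hence gen_p: "(g [^] m) [^] s \<in> generate G ?S" by (rule generate.incl)
    have "p ^ a dvd ord g" "p ^ a \<noteq> 0" using nm p(1) by (simp_all add: prime_gt_0_nat)
    hence "ord (g [^] (p ^ a)) = m" using ord_pow[OF g] m_def by simp
    moreover have "1 < p ^ a" using one_less_power[OF prime_gt_1_nat[OF p(1)]] a0 by simp
    hence "m < ord g" using nm m0 by simp
    ultimately have "g [^] (p ^ a) \<in> generate G ?S" using less.hyps g by simp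
    hence "inv ((g [^] (p ^ a)) [^] t) \<in> generate G ?S"
      using subgroup.m_inv_closed[OF sg] subgroup_nat_pow_closed[OF sg] by blast
    with gen_p have "inv ((g [^] (p ^ a)) [^] t) \<otimes> (g [^] m) [^] s \<in> generate G ?S"
      using subgroup.m_closed[OF sg] by blast
    thus ?thesis using st by simp
  qed
qed

lemma p_elements_commute:
  assumes p: "Factorial_Ring.prime p" and q: "Factorial_Ring.prime q" and pq: "p \<noteq> q"
    and Np: "p_elements G p \<lhd> G" and Nq: "p_elements G q \<lhd> G"
    and x: "x \<in> p_elements G p" and y: "y \<in> p_elements G q"
  shows "x \<otimes> y = y \<otimes> x"
proof -
  interpret P: normal "p_elements G p" G by (rule Np)
  interpret Q: normal "p_elements G q" G by (rule Nq)
  have xy: "x \<in> carrier G" "y \<in> carrier G" using x y p_elements_subset[of G p] p_elements_subset[of G q] by auto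
  define z where "z = commutator G x y"
  have zc: "z \<in> carrier G" using xy z_def by simp
  have "y \<otimes> inv x \<otimes> inv y \<in> p_elements G p"
    using P.inv_op_closed2[OF xy(2) P.m_inv_closed[OF x]] .
  hence "x \<otimes> (y \<otimes> inv x \<otimes> inv y) \<in> p_elements G p" using P.m_closed x by blast
  hence "z \<in> p_elements G p" using xy z_def by (simp add: m_assoc)
  then obtain i where zi: "z [^] (p ^ i) = \<one>" unfolding p_elements_def by auto
  have "x \<otimes> y \<otimes> inv x \<in> p_elements G q" using Q.inv_op_closed2[OF xy(1) y] .
  hence "z \<in> p_elements G q" using Q.m_closed Q.m_inv_closed[OF y] z_def by blast
  then obtain j where zj: "z [^] (q ^ j) = \<one>" unfolding p_elements_def by auto
  have "ord z dvd p ^ i" "ord z dvd q ^ j" using zi zj pow_eq_id[OF zc] by auto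
  moreover have "coprime (p ^ i) (q ^ j)" using primes_coprime[OF p q pq] by simp
  ultimately have "ord z = 1" by (metis coprime_common_divisor_nat)
  hence "z = \<one>" using ord_eq_1[OF zc] by simp
  thus ?thesis using commutator_eq_one_iff[OF xy] z_def by simp
qed

lemma commutator_subgroup_left:
  assumes fin: "finite (carrier G)" and N: "N \<lhd> G" and x: "x \<in> carrier G"
  shows "subgroup {h \<in> carrier G. commutator G x h \<in> N} G"
proof (rule subgroupI_finite[OF fin])
  interpret N: normal N G by (rule N)
  show "{h \<in> carrier G. commutator G x h \<in> N} \<subseteq> carrier G" by auto
  show "\<one> \<in> {h \<in> carrier G. commutator G x h \<in> N}" using x N.one_closed by simp
  fix h1 h2 assume h1: "h1 \<in> {h \<in> carrier G. commutator G x h \<in> N}"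
    and h2: "h2 \<in> {h \<in> carrier G. commutator G x h \<in> N}"
  have c: "h1 \<in> carrier G" "h2 \<in> carrier G" using h1 h2 by auto
  have "commutator G x (h1 \<otimes> h2) = commutator G x h1 \<otimes> (h1 \<otimes> commutator G x h2 \<otimes> inv h1)"
    using x c by (simp add: m_assoc inv_mult_group inv_mult_cancel)
  moreover have "h1 \<otimes> commutator G x h2 \<otimes> inv h1 \<in> N"
    using N.inv_op_closed2[OF c(1)] h2 by blast
  moreover have "commutator G x h1 \<in> N" using h1 by blast
  ultimately show "h1 \<otimes> h2 \<in> {h \<in> carrier G. commutator G x h \<in> N}"
    using c N.m_closed by simp
qed

text \<open>An element of \<open>p_elements G p\<close> commutes with the \<open>q\<close>-elements for all \<open>q \<noteq> p\<close>, and these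
  together with \<open>p_elements G p\<close> generate \<open>G\<close>.\<close>

lemma upper_central_p_elements_subset:
  assumes fin: "finite (carrier G)" and p: "Factorial_Ring.prime p"
    and normal: "\<And>q. Factorial_Ring.prime q \<Longrightarrow> p_elements G q \<lhd> G"
  shows "upper_central (G\<lparr>carrier := p_elements G p\<rparr>) i \<subseteq> upper_central G i"
proof (induction i)
  case 0 thus ?case by simp
next
  case (Suc i)
  let ?P = "G\<lparr>carrier := p_elements G p\<rparr>"
  let ?S = "\<Union>q\<in>{q. Factorial_Ring.prime q}. p_elements G q"
  interpret P: normal "p_elements G p" G by (rule normal[OF p])
  show ?case
  proof
    fix x assume x: "x \<in> upper_central ?P (Suc i)"
    hence xP: "x \<in> p_elements G p" by simp
    have xc: "x \<in> carrier G" using xP p_elements_subset[of G p] by blast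
    define W where "W = {h \<in> carrier G. commutator G x h \<in> upper_central G i}"
    have "subgroup W G"
      unfolding W_def by (rule commutator_subgroup_left[OF fin upper_central_normal[OF fin] xc])
    moreover have "?S \<subseteq> W"
    proof
      fix g assume "g \<in> ?S"
      then obtain q where q: "Factorial_Ring.prime q" "g \<in> p_elements G q" by blast
      have gc: "g \<in> carrier G" using q p_elements_subset[of G q] by blast
      show "g \<in> W"
      proof (cases "q = p")
        case True
        have "commutator ?P x g \<in> upper_central ?P i" using x q True by simp
        hence "commutator G x g \<in> upper_central ?P i"
          using m_inv_consistent[OF P.subgroup_axioms xP] m_inv_consistent[OF P.subgroup_axioms]
            q True by simp
        thus ?thesis using Suc gc unfolding W_def by blast
      next
        case False
        have "x \<otimes> g = g \<otimes> x"
          using p_elements_commute[OF p q(1) _ normal[OF p] normal[OF q(1)] xP q(2)] False by simp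
        hence "commutator G x g = \<one>" using commutator_eq_one_iff[OF xc gc] by simp
        moreover have "\<one> \<in> upper_central G i"
          using subgroup.one_closed[OF normal_imp_subgroup[OF upper_central_normal[OF fin]]] .
        ultimately show ?thesis using gc unfolding W_def by simp
      qed
    qed
    ultimately have "carrier G \<subseteq> W"
      using generate_subgroup_incl generate_p_elements[OF fin] by blast
    thus "x \<in> upper_central G (Suc i)" using xc unfolding W_def by auto
  qed
qed

end

theorem nilpotent_if_card_p_elements_le:
  assumes G: "group G" and fin: "finite (carrier G)"
    and bound: "\<And>p. Factorial_Ring.prime p \<Longrightarrow> card (p_elements G p) \<le> p ^ multiplicity p (order G)"
  shows "nilpotent_group G"
proof -
  interpret group G by fact
  have normal: "p_elements G q \<lhd> G" if "Factorial_Ring.prime q" for q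
    using p_elements_sylow(1)[OF fin that bound[OF that]] .
  let ?S = "\<Union>p\<in>{p. Factorial_Ring.prime p}. p_elements G p"
  have "?S \<subseteq> upper_central G (order G)"
  proof
    fix g assume "g \<in> ?S"
    then obtain p where p: "Factorial_Ring.prime p" "g \<in> p_elements G p" by blast
    let ?P = "G\<lparr>carrier := p_elements G p\<rparr>"
    interpret P: group ?P
      using subgroup.subgroup_is_group[OF normal_imp_subgroup[OF normal[OF p(1)]] is_group] .
    have finP: "finite (carrier ?P)" using finite_subset[OF p_elements_subset[of G p] fin] by simp
    have "order ?P = p ^ multiplicity p (order G)"
      using p_elements_sylow(2)[OF fin p(1) bound[OF p(1)]] by (simp add: order_def)
    hence "upper_central ?P (order ?P) = p_elements G p"
      using P.p_group_upper_central_eq_carrier[OF finP p(1)] by simp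
    moreover have "order ?P \<le> order G"
      unfolding order_def using card_mono[OF fin p_elements_subset[of G p]] by simp
    ultimately have "p_elements G p \<subseteq> upper_central ?P (order G)"
      using P.upper_central_mono by blast
    thus "g \<in> upper_central G (order G)"
      using upper_central_p_elements_subset[OF fin p(1) normal] p(2) by blast
  qed
  hence "carrier G \<subseteq> upper_central G (order G)"
    using generate_subgroup_incl[OF _ normal_imp_subgroup[OF upper_central_normal[OF fin]]]
      generate_p_elements[OF fin] by blast
  thus ?thesis
    using nilpotent_if_upper_central_eq_carrier[OF fin] upper_central_subset by blast
qed

theorem lemma1:
  fixes G :: "('a, 'b) monoid_scheme" and H :: "('c, 'd) monoid_scheme"
  assumes "group G" and "finite (carrier G)" and "nilpotent_group G"
    and "group H" and "finite (carrier H)"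
    and "epg_iso G H"
  shows "nilpotent_group H"
proof -
  obtain f where f: "bij_betw f (carrier G) (carrier H)"
    and adj: "\<forall>x\<in>carrier G. \<forall>y\<in>carrier G. epg_adj G x y \<longleftrightarrow> epg_adj H (f x) (f y)"
    using assms(6) unfolding epg_iso_def by blast
  interpret epg_iso_map G H f
    using assms(1,2,4,5) f adj by (intro epg_iso_map.intro epg_iso_map_axioms.intro) auto
  have "order G = order H" unfolding order_def using bij by (rule bij_betw_same_card)
  show ?thesis
  proof (rule nilpotent_if_card_p_elements_le[OF assms(4,5)])
    fix p :: nat assume "Factorial_Ring.prime p"
    thus "card (p_elements H p) \<le> p ^ multiplicity p (order H)"
      using card_p_elements_le_if_nilpotent[OF assms(1-3)] card_p_elements_eq \<open>order G = order H\<close>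
      by metis
  qed
qed

end
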